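(* Let $\mathbf{k}=(k_1,\ldots,k_n)$ be an admissible index and $\alpha\in\mathbb{C}$ with $\mathrm{Re}\,\alpha>0$. Then for all $\beta\in\mathbb{C}$ with $|\beta-\alpha|<\mathrm{Re}\,\alpha$: (i) $\displaystyle Z(k_1,\ldots,k_n;\beta,\alpha)=\sum_{l=0}^{\infty}(\alpha-\beta)^l\sum_{i=0}^{l}\sum_{\substack{i_1+\cdots+i_{n-1}=i\\ i_j\in\mathbb{Z}_{\ge0}}}S_{l-i}(k_1,\{1\}^{i_1},k_2,\ldots,k_{n-1},\{1\}^{i_{n-1}},k_n;\alpha)$; (ii) $\displaystyle Z(k_1,\ldots,k_n;\alpha,\beta)=\sum_{l=0}^{\infty}(\alpha-\beta)^l\sum_{i=0}^{l}\sum_{\mathbf{i}^{(1)}_{k_1-1}+\cdots+\mathbf{i}^{(n)}_{k_n-2}=i}S_{l-i}\bigl(k_1+\mathbf{i}^{(1)}_{k_1-1},\ldots,k_{n-1}+\mathbf{i}^{(n-1)}_{k_{n-1}-1},k_n+\mathbf{i}^{(n)}_{k_n-2};\alpha\bigr)$.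
   Context: An index $(k_1,\ldots,k_n)$ is admissible if all $k_i$ are positive integers and $k_n\ge2$. For $a\in\mathbb{C}$, $(a)_0=1$ and $(a)_m=a(a+1)\cdots(a+m-1)$ for $m\ge1$. For an admissible index and $\mathrm{Re}\,\alpha>0$, $\beta\notin\mathbb{Z}_{\le0}$, \[ Z(k_1,\ldots,k_n;\alpha,\beta)=\sum_{0\le m_1<\cdots<m_n}\frac{(\alpha)_{m_1}}{m_1!}\frac{m_n!}{(\alpha)_{m_n+1}}\frac{1}{(m_1+\beta)^{k_1}\cdots(m_{n-1}+\beta)^{k_{n-1}}(m_n+\beta)^{k_n-1}}, \] $Z(\mathbf{k};\alpha):=Z(\mathbf{k};\alpha,\alpha)$, and $S_l(\mathbf{k};\alpha):=\sum_{l_1+\cdots+l_n=l,\ l_i\in\mathbb{Z}_{\ge0}}Z(k_1+l_1,\ldots,k_n+l_n;\alpha)$. $\{1\}^a$ denotes $a$ consecutive entries equal to $1$. For $m\ge1$, $r\ge0$ and nonnegative integers $i^{(m)}_1,\ldots,i^{(m)}_r$, $\mathbf{i}^{(m)}_r:=i^{(m)}_1+\cdots+i^{(m)}_r$ (equal to $0$ if $r=0$); the sum over $\mathbf{i}^{(1)}_{k_1-1}+\cdots+\mathbf{i}^{(n)}_{k_n-2}=i$ runs over all tuples of nonnegative integers $(i^{(1)}_1,\ldots,i^{(1)}_{k_1-1},\ldots,i^{(n-1)}_1,\ldots,i^{(n-1)}_{k_{n-1}-1},i^{(n)}_1,\ldots,i^{(n)}_{k_n-2})$ with total sum $i$. 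*)

theory Defs
  imports "HOL-Analysis.Analysis"
begin

definition admissible :: "nat list \<Rightarrow> bool" where
  "admissible k \<longleftrightarrow> k \<noteq> [] \<and> (\<forall>x\<in>set k. 0 < x) \<and> 2 \<le> last k"

definition Z_term :: "nat list \<Rightarrow> complex \<Rightarrow> complex \<Rightarrow> nat list \<Rightarrow> complex" where
  "Z_term k \<alpha> \<beta> m =
     pochhammer \<alpha> (m ! 0) / of_nat (fact (m ! 0))
     * (of_nat (fact (last m)) / pochhammer \<alpha> (last m + 1))
     * (\<Prod>j<length k - 1. 1 / (of_nat (m ! j) + \<beta>) ^ (k ! j))
     * (1 / (of_nat (last m) + \<beta>) ^ (last k - 1))"

definition incr_tuples :: "nat \<Rightarrow> nat list set" where
  "incr_tuples n = {m. length m = n \<and> sorted_wrt (<) m}"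

definition Z :: "nat list \<Rightarrow> complex \<Rightarrow> complex \<Rightarrow> complex" where
  "Z k \<alpha> \<beta> = infsum (Z_term k \<alpha> \<beta>) (incr_tuples (length k))"

definition comps :: "nat \<Rightarrow> nat \<Rightarrow> nat list set" where
  "comps r s = {l. length l = r \<and> sum_list l = s}"

definition S :: "nat \<Rightarrow> nat list \<Rightarrow> complex \<Rightarrow> complex" where
  "S l k \<alpha> = (\<Sum>ls\<in>comps (length k) l. Z (map2 (+) k ls) \<alpha> \<alpha>)"

text \<open>(k_1,{1}^{i_1},k_2,...,k_{n-1},{1}^{i_{n-1}},k_n) for is = (i_1,...,i_{n-1}).\<close>
definition insert_ones :: "nat list \<Rightarrow> nat list \<Rightarrow> nat list" where
  "insert_ones k is = concat (map2 (\<lambda>kj ij. kj # replicate ij 1) (butlast k) is) @ [last k]"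

definition tuple_families :: "nat list \<Rightarrow> nat \<Rightarrow> nat list list set" where
  "tuple_families k i = {ts. length ts = length k
      \<and> (\<forall>j<length k. length (ts ! j) = (if j = length k - 1 then k ! j - 2 else k ! j - 1))
      \<and> sum_list (map sum_list ts) = i}"

definition raise_index :: "nat list \<Rightarrow> nat list list \<Rightarrow> nat list" where
  "raise_index k ts = map2 (\<lambda>kj t. kj + sum_list t) k ts"

end

theory Submission
  imports Defs
begin

text \<open>Write \<open>x = \<alpha> - \<beta>\<close> and \<open>z\<^sub>t = t + \<alpha>\<close>. For \<open>Z(k; \<alpha>, \<beta>)\<close> every factor
  \<open>1/(m\<^sub>j + \<beta>) = 1/(z\<^bsub>m\<^sub>j\<^esub> - x)\<close> of a summand is expanded into a geometric series in \<open>x\<close>;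
  the resulting larger exponents of the \<open>z\<^bsub>m\<^sub>j\<^esub>\<close> are the raised indices and the shift in
  \<open>S\<^sub>l\<close>. For \<open>Z(k; \<beta>, \<alpha>)\<close> only the Pochhammer factor changes: it is the corresponding
  \<open>\<alpha>\<close>-factor times \<open>\<Prod>t=m\<^sub>1..m\<^sub>n. z\<^sub>t/(z\<^sub>t - x)\<close>. For \<open>t = m\<^sub>j\<close> the factor is expanded
  geometrically; for a gap \<open>t \<notin> {m\<^sub>1,...,m\<^sub>n}\<close> it is written as \<open>1 + x/(z\<^sub>t - x)\<close>, and choosing
  the second term inserts \<open>t\<close> as a new entry of the tuple, which produces the inserted ones.

  All these multiple series are dominated by the real series with parameter
  \<open>g = Re \<alpha> - |\<alpha> - \<beta>| > 0\<close>, which converges for admissible \<open>k\<close> because its summand decays like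
  \<open>\<Prod>\<^sub>j (m\<^sub>j + 1)\<^bsup>-1-\<epsilon>\<^esup>\<close>. So the expansions may be rearranged: explicit bijections regroup
  the terms by the total power \<open>l\<close> of \<open>x\<close>, and the coefficient of \<open>x\<^sup>l\<close> is the stated finite
  sum of values of \<open>S\<close>.\<close>

section \<open>Sums of products of series\<close>

lemma has_sum_geometric_inverse_diff:
  fixes x z :: "'a :: {real_normed_field, banach}"
  assumes "norm x < norm z"
  shows "((\<lambda>d. x ^ d / z ^ Suc d) has_sum 1 / (z - x)) UNIV"
    and "(\<lambda>d. norm (x ^ d / z ^ Suc d)) summable_on UNIV"
proof -
  have z0: "z \<noteq> 0" using assms by auto
  have q: "norm (x / z) < 1" using assms z0 by (simp add: norm_divide divide_less_eq)
  have eq: "(\<lambda>d. (x/z) ^ d * (1/z)) = (\<lambda>d. x ^ d / z ^ Suc d)"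
    by (auto simp: power_divide)
  have "(\<lambda>d. (x/z) ^ d * (1/z)) sums (1 / (1 - x/z) * (1/z))"
    by (rule sums_mult2[OF geometric_sums[OF q]])
  moreover have "1 / (1 - x/z) * (1/z) = 1 / (z - x)"
    using z0 by (simp add: field_simps)
  ultimately have s: "(\<lambda>d. x ^ d / z ^ Suc d) sums (1 / (z - x))" by (simp only: eq)
  have "(\<lambda>d. norm (x/z) ^ d * (1 / norm z)) = (\<lambda>d. norm (x ^ d / z ^ Suc d))"
    by (auto simp: norm_divide norm_power power_divide norm_mult)
  moreover have "summable (\<lambda>d. norm (x/z) ^ d * (1 / norm z))"
    by (intro summable_mult2 summable_geometric) (use q in simp)
  ultimately have ns: "summable (\<lambda>d. norm (x ^ d / z ^ Suc d))" by simp
  show "((\<lambda>d. x ^ d / z ^ Suc d) has_sum 1 / (z - x)) UNIV"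
    by (rule norm_summable_imp_has_sum[OF ns s])
  show "(\<lambda>d. norm (x ^ d / z ^ Suc d)) summable_on UNIV"
    using ns by (intro summable_nonneg_imp_summable_on) auto
qed

lemma norm_geometric_term:
  fixes x z :: "'a::real_normed_field"
  shows "norm (x ^ d / z ^ Suc d) = norm x ^ d / norm z ^ Suc d"
  by (simp add: norm_divide norm_power del: power_Suc)

lemma norm_prod_summable_on_PiE:
  fixes f :: "'a \<Rightarrow> 'b \<Rightarrow> 'c :: {banach, real_normed_field}"
  assumes fin: "finite A" and ab: "\<And>x. x \<in> A \<Longrightarrow> (\<lambda>y. norm (f x y)) summable_on B x"
  shows "(\<lambda>g. norm (\<Prod>x\<in>A. f x (g x))) summable_on PiE A B"
proof (cases "\<exists>x\<in>A. infsum (\<lambda>y. norm (f x y)) (B x) = 0")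
  case True
  then obtain x where x: "x \<in> A" "infsum (\<lambda>y. norm (f x y)) (B x) = 0" by blast
  have "f x y = 0" if "y \<in> B x" for y
    using nonneg_infsum_le_0D[of "\<lambda>y. norm (f x y)" "B x" y] ab[OF x(1)] x(2) that by auto
  hence "(\<Prod>x\<in>A. f x (g x)) = 0" if "g \<in> PiE A B" for g
    using that x(1) fin by (intro prod_zero) (auto simp: PiE_def Pi_def)
  hence "(\<lambda>g. norm (\<Prod>x\<in>A. f x (g x))) summable_on PiE A B \<longleftrightarrow> (\<lambda>g. 0::real) summable_on PiE A B"
    by (intro summable_on_cong) auto
  thus ?thesis by simp
next
  case False
  have "infsum (\<lambda>g. \<Prod>x\<in>A. norm (f x (g x))) (PiE A B) = (\<Prod>x\<in>A. infsum (\<lambda>y. norm (f x y)) (B x))"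
    by (rule infsum_prod_PiE_abs[OF fin]) (use ab in simp)
  moreover have "(\<Prod>x\<in>A. infsum (\<lambda>y. norm (f x y)) (B x)) \<noteq> 0"
    using False fin by simp
  ultimately have "(\<lambda>g. \<Prod>x\<in>A. norm (f x (g x))) summable_on PiE A B"
    using infsum_not_exists by fastforce
  thus ?thesis by (simp add: prod_norm)
qed

lemma has_sum_prod_PiE:
  fixes f :: "'a \<Rightarrow> 'b \<Rightarrow> 'c :: {banach, real_normed_field}"
  assumes fin: "finite A" and hs: "\<And>x. x \<in> A \<Longrightarrow> (f x has_sum s x) (B x)"
    and ab: "\<And>x. x \<in> A \<Longrightarrow> (\<lambda>y. norm (f x y)) summable_on B x"
  shows "((\<lambda>g. \<Prod>x\<in>A. f x (g x)) has_sum (\<Prod>x\<in>A. s x)) (PiE A B)"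
proof -
  have "(\<lambda>g. \<Prod>x\<in>A. f x (g x)) summable_on PiE A B"
    using norm_prod_summable_on_PiE[OF fin ab] by (rule abs_summable_summable)
  moreover have "infsum (\<lambda>g. \<Prod>x\<in>A. f x (g x)) (PiE A B) = (\<Prod>x\<in>A. infsum (f x) (B x))"
    by (rule infsum_prod_PiE_abs[OF fin ab])
  moreover have "(\<Prod>x\<in>A. infsum (f x) (B x)) = (\<Prod>x\<in>A. s x)"
    using hs by (intro prod.cong) (auto simp: has_sum_iff)
  ultimately show ?thesis by (simp add: has_sum_iff)
qed

lemma has_sum_prod_geometric_PiE:
  fixes x :: "'a::{real_normed_field, banach}"
  assumes "finite A" and "\<And>s. s \<in> A \<Longrightarrow> norm x < norm (z s)"
  shows "((\<lambda>c. \<Prod>s\<in>A. x ^ c s / z s ^ Suc (c s)) has_sum (\<Prod>s\<in>A. 1 / (z s - x))) (PiE A (\<lambda>_. UNIV))"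
  using assms by (intro has_sum_prod_PiE has_sum_geometric_inverse_diff) auto

lemma has_sum_prod_Pow_PiE:
  fixes u v :: "'a \<Rightarrow> 'b \<Rightarrow> 'c::{banach, real_normed_field}"
  assumes fA: "finite A" and fG: "finite G" and disj: "A \<inter> G = {}"
    and hu: "\<And>t. t \<in> A \<Longrightarrow> (u t has_sum U t) UNIV"
    and nu: "\<And>t. t \<in> A \<Longrightarrow> (\<lambda>d. norm (u t d)) summable_on UNIV"
    and hv: "\<And>t. t \<in> G \<Longrightarrow> (v t has_sum V t) UNIV"
    and nv: "\<And>t. t \<in> G \<Longrightarrow> (\<lambda>d. norm (v t d)) summable_on UNIV"
  shows "((\<lambda>(P,d). (\<Prod>t\<in>A. u t (d t)) * (\<Prod>t\<in>P. v t (d t))) has_sum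
            ((\<Prod>t\<in>A. U t) * (\<Prod>t\<in>G. 1 + V t))) (Sigma (Pow G) (\<lambda>P. PiE (A \<union> P) (\<lambda>_. UNIV)))"
    and "(\<lambda>(P,d). norm ((\<Prod>t\<in>A. u t (d t)) * (\<Prod>t\<in>P. v t (d t)))) summable_on
            (Sigma (Pow G) (\<lambda>P. PiE (A \<union> P) (\<lambda>_. UNIV)))"
proof -
  define w where "w t = (if t \<in> A then u t else v t)" for t
  define W where "W t = (if t \<in> A then U t else V t)" for t
  define F where "F = (\<lambda>(P,d). (\<Prod>t\<in>A. u t (d t)) * (\<Prod>t\<in>P. v t (d t)))"
  define I where "I = Sigma (Pow G) (\<lambda>P. PiE (A \<union> P) (\<lambda>_. UNIV :: 'b set))"
  have fP: "finite P" and dj: "A \<inter> P = {}" if "P \<in> Pow G" for P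
    using that fG disj finite_subset by auto
  have Feq: "F (P, d) = (\<Prod>t\<in>A \<union> P. w t (d t))" if "P \<in> Pow G" for P d
    using dj[OF that] unfolding F_def prod.union_disjoint[OF fA fP[OF that] dj[OF that]]
    by (auto simp: w_def intro!: arg_cong2[where f="(*)"] prod.cong)
  have inner: "((\<lambda>d. F (P, d)) has_sum ((\<Prod>t\<in>A. U t) * (\<Prod>t\<in>P. V t))) (PiE (A \<union> P) (\<lambda>_. UNIV))"
    if P: "P \<in> Pow G" for P
  proof -
    have "((\<lambda>d. \<Prod>t\<in>A \<union> P. w t (d t)) has_sum (\<Prod>t\<in>A \<union> P. W t)) (PiE (A \<union> P) (\<lambda>_. UNIV))"
      using P by (intro has_sum_prod_PiE) (use fA fP hu hv nu nv in \<open>auto simp: w_def W_def\<close>)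
    moreover have "(\<Prod>t\<in>A \<union> P. W t) = (\<Prod>t\<in>A. U t) * (\<Prod>t\<in>P. V t)"
      using dj[OF P] unfolding prod.union_disjoint[OF fA fP[OF P] dj[OF P]]
      by (auto simp: W_def intro!: arg_cong2[where f="(*)"] prod.cong)
    ultimately show ?thesis using Feq[OF P] by simp
  qed
  have innern: "(\<lambda>d. norm (F (P, d))) summable_on (PiE (A \<union> P) (\<lambda>_. UNIV))" if P: "P \<in> Pow G" for P
  proof -
    have "(\<lambda>d. norm (\<Prod>t\<in>A \<union> P. w t (d t))) summable_on (PiE (A \<union> P) (\<lambda>_. UNIV))"
      using P by (intro norm_prod_summable_on_PiE) (use fA fP nu nv in \<open>auto simp: w_def\<close>)
    thus ?thesis using Feq[OF P] by simp
  qed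
  have "(\<lambda>(P,d). norm (F (P,d))) summable_on I"
    unfolding I_def
    by (rule summable_on_SigmaI[where g="\<lambda>P. infsum (\<lambda>d. norm (F (P, d))) (PiE (A \<union> P) (\<lambda>_. UNIV))"])
       (use innern fG in auto)
  hence ns: "(\<lambda>x. norm (F x)) summable_on I" by (simp add: case_prod_unfold)
  thus "(\<lambda>(P,d). norm ((\<Prod>t\<in>A. u t (d t)) * (\<Prod>t\<in>P. v t (d t)))) summable_on I"
    by (simp add: F_def case_prod_unfold)
  have "(\<Prod>t\<in>G. 1 + V t) = (\<Sum>X\<in>Pow G. (\<Prod>t\<in>X. V t))"
    using prod_add[OF fG, of V "\<lambda>_. 1"] by (simp add: add.commute)
  hence "((\<lambda>P. (\<Prod>t\<in>A. U t) * (\<Prod>t\<in>P. V t)) has_sum ((\<Prod>t\<in>A. U t) * (\<Prod>t\<in>G. 1 + V t))) (Pow G)"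
    using fG by (intro has_sum_finiteI) (auto simp: sum_distrib_left)
  from has_sum_SigmaI[OF inner this abs_summable_summable[OF ns[unfolded I_def]]]
  show "((\<lambda>(P,d). (\<Prod>t\<in>A. u t (d t)) * (\<Prod>t\<in>P. v t (d t))) has_sum
            ((\<Prod>t\<in>A. U t) * (\<Prod>t\<in>G. 1 + V t))) I"
    by (simp add: F_def I_def)
qed

lemma has_sum_prod_geometric_Pow_PiE:
  fixes x :: "'a::{real_normed_field, banach}" and z :: "nat \<Rightarrow> 'a"
  assumes "finite A" "finite G" "A \<inter> G = {}" and zx: "\<And>t. norm x < norm (z t)"
    and K1: "\<And>t. t \<in> A \<Longrightarrow> 1 \<le> K t"
  defines "T \<equiv> \<lambda>(P,d). (\<Prod>t\<in>A. x ^ d t / z t ^ (K t + d t)) * (\<Prod>t\<in>P. x ^ Suc (d t) / z t ^ Suc (d t))"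
    and "D \<equiv> Sigma (Pow G) (\<lambda>P. PiE (A \<union> P) (\<lambda>_. UNIV))"
  shows "(T has_sum (\<Prod>t\<in>A. 1/(z t - x) * (1 / z t ^ (K t - 1))) * (\<Prod>t\<in>G. 1 + x/(z t - x))) D"
    and "(\<lambda>y. norm (T y)) summable_on D"
proof -
  define u where "u t d = x ^ d / z t ^ Suc d * (1 / z t ^ (K t - 1))" for t d
  define v where "v t d = x * (x ^ d / z t ^ Suc d)" for t d
  have "x ^ d / z t ^ (K t + d) = u t d" if t: "t \<in> A" for t d
  proof -
    obtain r where "K t = Suc r" using K1[OF t] by (cases "K t") auto
    thus ?thesis by (simp add: u_def power_add field_simps)
  qed
  hence T: "T = (\<lambda>(P,d). (\<Prod>t\<in>A. u t (d t)) * (\<Prod>t\<in>P. v t (d t)))"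
    by (auto simp: T_def v_def fun_eq_iff intro!: arg_cong2[where f="(*)"] prod.cong)
  note geo = has_sum_geometric_inverse_diff[OF zx]
  have hu: "(u t has_sum 1/(z t - x) * (1 / z t ^ (K t - 1))) UNIV" for t
    unfolding u_def by (rule has_sum_cmult_left[OF geo(1)])
  have nu: "(\<lambda>d. norm (u t d)) summable_on UNIV" for t
    unfolding u_def norm_mult by (rule summable_on_cmult_left[OF geo(2)])
  have hv: "(v t has_sum x * (1 / (z t - x))) UNIV" for t
    unfolding v_def by (rule has_sum_cmult_right[OF geo(1)])
  have nv: "(\<lambda>d. norm (v t d)) summable_on UNIV" for t
    unfolding v_def norm_mult by (rule summable_on_cmult_right[OF geo(2)])
  show "(T has_sum (\<Prod>t\<in>A. 1/(z t - x) * (1 / z t ^ (K t - 1))) * (\<Prod>t\<in>G. 1 + x/(z t - x))) D"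
    unfolding T D_def by (rule has_sum_prod_Pow_PiE(1)[OF assms(1-3)]) (use hu nu hv nv in auto)
  have "(\<lambda>(P,d). norm ((\<Prod>t\<in>A. u t (d t)) * (\<Prod>t\<in>P. v t (d t)))) summable_on D"
    unfolding D_def by (rule has_sum_prod_Pow_PiE(2)[OF assms(1-3)]) (use hu nu hv nv in auto)
  thus "(\<lambda>y. norm (T y)) summable_on D"
    unfolding T by (simp add: case_prod_unfold)
qed

lemma has_sum_Sigma_dominated:
  fixes F :: "'a \<Rightarrow> 'b \<Rightarrow> 'c::banach" and R :: "'a \<Rightarrow> real"
  assumes inner: "\<And>m. m \<in> A \<Longrightarrow> (F m has_sum Zt m) (B m)"
    and nsum: "\<And>m. m \<in> A \<Longrightarrow> (\<lambda>y. norm (F m y)) summable_on B m"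
    and nbound: "\<And>m. m \<in> A \<Longrightarrow> infsum (\<lambda>y. norm (F m y)) (B m) \<le> R m"
    and Rs: "R summable_on A"
  shows "((\<lambda>(m,y). F m y) has_sum infsum Zt A) (Sigma A B)"
proof -
  have "(\<lambda>m. infsum (\<lambda>y. norm (F m y)) (B m)) summable_on A"
    by (rule summable_on_comparison_test[OF Rs]) (use nbound in \<open>auto intro: infsum_nonneg\<close>)
  hence "(\<lambda>(m,y). norm (F m y)) summable_on Sigma A B"
    by (intro summable_on_SigmaI[where g="\<lambda>m. infsum (\<lambda>y. norm (F m y)) (B m)"])
       (use nsum in \<open>auto simp: has_sum_infsum\<close>)
  hence "(\<lambda>x. norm ((\<lambda>(m,y). F m y) x)) summable_on Sigma A B" by (simp add: case_prod_unfold)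
  hence "(\<lambda>(m,y). F m y) summable_on Sigma A B" by (rule abs_summable_summable)
  then obtain T where T: "((\<lambda>(m,y). F m y) has_sum T) (Sigma A B)" by (auto simp: summable_on_def)
  have "(Zt has_sum T) A" by (rule has_sum_SigmaD[OF T]) (use inner in simp)
  thus ?thesis using T by (simp add: has_sum_iff)
qed

lemma sums_collect_powers:
  fixes H :: "nat \<times> ('j \<times> 'm) \<Rightarrow> complex"
  assumes hs: "(H has_sum T) (Sigma UNIV (\<lambda>l. Sigma (J l) M))"
    and fin: "\<And>l. finite (J l)"
    and HY: "\<And>l j m. j \<in> J l \<Longrightarrow> m \<in> M j \<Longrightarrow> H (l, (j, m)) = x ^ l * Y j m"
  shows "(\<lambda>l. x ^ l * (\<Sum>j\<in>J l. infsum (Y j) (M j))) sums T"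
proof -
  have sH: "H summable_on (Sigma UNIV (\<lambda>l. Sigma (J l) M))" using hs by (rule has_sum_imp_summable)
  have s1: "(\<lambda>y. H (l, y)) summable_on Sigma (J l) M" for l
    using summable_on_SigmaD1[of "\<lambda>l y. H (l, y)" UNIV "\<lambda>l. Sigma (J l) M" l] sH
    by (simp add: case_prod_unfold)
  have s2: "(\<lambda>m. H (l, (j, m))) summable_on M j" if "j \<in> J l" for l j
    using summable_on_SigmaD1[of "\<lambda>j m. H (l, (j, m))" "J l" M j] s1[of l] that
    by (simp add: case_prod_unfold)
  have inner: "((\<lambda>m. H (l, (j, m))) has_sum x ^ l * infsum (Y j) (M j)) (M j)" if j: "j \<in> J l" for l j
  proof (cases "x ^ l = 0")
    case True
    hence "((\<lambda>m. H (l, (j, m))) has_sum 0) (M j)"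
      using HY[OF j] by (subst has_sum_cong[where g="\<lambda>_. 0"]) auto
    thus ?thesis using True by (metis mult_zero_left)
  next
    case False
    have "(\<lambda>m. x ^ l * Y j m) summable_on M j"
      using s2[OF j] HY[OF j] by (subst summable_on_cong[where g="\<lambda>m. H (l, (j, m))"]) auto
    hence "Y j summable_on M j" using False summable_on_cmult_right' by blast
    hence "((\<lambda>m. x ^ l * Y j m) has_sum x ^ l * infsum (Y j) (M j)) (M j)"
      by (intro has_sum_cmult_right) (simp add: has_sum_infsum)
    thus ?thesis using HY[OF j] by (subst has_sum_cong[where g="\<lambda>m. x ^ l * Y j m"]) auto
  qed
  have "((\<lambda>y. H (l, y)) has_sum x ^ l * (\<Sum>j\<in>J l. infsum (Y j) (M j))) (Sigma (J l) M)" for l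
  proof -
    have "((\<lambda>j. x ^ l * infsum (Y j) (M j)) has_sum (x ^ l * (\<Sum>j\<in>J l. infsum (Y j) (M j)))) (J l)"
      using fin[of l] by (intro has_sum_finiteI) (simp_all add: sum_distrib_left)
    from has_sum_SigmaI[where f="\<lambda>y. H (l, y)", OF _ this s1[of l]] inner
    show ?thesis by (simp add: case_prod_unfold)
  qed
  hence "((\<lambda>l. x ^ l * (\<Sum>j\<in>J l. infsum (Y j) (M j))) has_sum T) UNIV"
    by (rule has_sum_SigmaD[OF hs])
  thus ?thesis by (rule has_sum_imp_sums)
qed

lemma prod_power_div_power_Suc:
  fixes x z :: "'a::field"
  assumes "finite A"
  shows "(\<Prod>p\<in>A. x ^ f p / z ^ Suc (f p)) = x ^ (\<Sum>p\<in>A. f p) / z ^ (card A + (\<Sum>p\<in>A. f p))"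
  using assms by (induction A rule: finite_induct) (auto simp: power_add field_simps)

section \<open>Strictly increasing lists and compositions\<close>

lemma strict_sorted_nth_mono:
  fixes xs :: "'a::linorder list"
  assumes "sorted_wrt (<) xs" "i \<le> j" "j < length xs"
  shows "xs!i \<le> xs!j"
  using assms by (intro sorted_nth_mono) (auto simp: strict_sorted_iff)

lemma strict_sorted_nth_less_iff:
  fixes xs :: "'a::linorder list"
  assumes "sorted_wrt (<) xs" "i < length xs" "j < length xs"
  shows "xs!i < xs!j \<longleftrightarrow> i < j"
proof
  assume "xs!i < xs!j"
  thus "i < j" using strict_sorted_nth_mono[OF assms(1), of j i] assms by (meson leD not_less)
qed (use assms in \<open>auto simp: sorted_wrt_iff_nth_less\<close>)

lemma strict_sorted_nth_eq_iff:
  fixes xs :: "'a::linorder list"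
  assumes "sorted_wrt (<) xs" "i < length xs" "j < length xs"
  shows "xs!i = xs!j \<longleftrightarrow> i = j"
  using assms by (simp add: strict_sorted_iff nth_eq_iff_index_eq)

lemma card_less_strict_sorted_nth:
  fixes xs :: "'a::linorder list"
  assumes "sorted_wrt (<) xs" "q < length xs"
  shows "card {u \<in> set xs. u < xs!q} = q"
proof -
  have "{u \<in> set xs. u < xs!q} = (\<lambda>i. xs!i) ` {..<q}"
  proof (intro equalityI subsetI)
    fix u assume "u \<in> {u \<in> set xs. u < xs!q}"
    then obtain i where "i < length xs" "u = xs!i" "xs!i < xs!q" by (auto simp: in_set_conv_nth)
    thus "u \<in> (\<lambda>i. xs!i) ` {..<q}" using strict_sorted_nth_less_iff[OF assms(1)] assms(2) by auto
  qed (use assms in \<open>auto simp: sorted_wrt_iff_nth_less\<close>)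
  moreover have "inj_on (\<lambda>i. xs!i) {..<q}"
    using assms by (intro inj_onI) (auto simp: strict_sorted_nth_eq_iff)
  ultimately show ?thesis by (simp add: card_image)
qed

lemma prod_set_distinct_nth:
  fixes f :: "'a \<Rightarrow> 'b::comm_monoid_mult"
  assumes "distinct xs"
  shows "(\<Prod>t\<in>set xs. f t) = (\<Prod>j<length xs. f (xs!j))"
proof -
  have "inj_on (\<lambda>j. xs!j) {..<length xs}"
    using assms by (intro inj_onI) (auto simp: nth_eq_iff_index_eq)
  moreover have "(\<lambda>j. xs!j) ` {..<length xs} = set xs" by (auto simp: in_set_conv_nth)
  ultimately show ?thesis using prod.reindex[of "\<lambda>j. xs!j" "{..<length xs}" f] by simp
qed

lemma set_strict_sorted_subset_interval:
  fixes m :: "'a::linorder list"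
  assumes "sorted_wrt (<) m" "m \<noteq> []"
  shows "set m \<subseteq> {m!0..last m}"
proof
  fix t assume "t \<in> set m"
  then obtain i where i: "i < length m" "t = m!i" by (auto simp: in_set_conv_nth)
  have "m!0 \<le> m!i" "m!i \<le> m!(length m - 1)"
    using assms i by (auto intro!: strict_sorted_nth_mono)
  thus "t \<in> {m!0..last m}" using i assms by (auto simp: last_conv_nth)
qed

lemma sorted_list_of_set_nth_card_less:
  fixes A :: "'a::linorder set"
  assumes "finite A" "s \<in> A"
  shows "sorted_list_of_set A ! card {u \<in> A. u < s} = s"
    and "card {u \<in> A. u < s} < card A"
proof -
  define xs where "xs = sorted_list_of_set A"
  have sx: "set xs = A" "sorted_wrt (<) xs" using assms by (auto simp: xs_def strict_sorted_list_of_set)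
  obtain q where q: "q < length xs" "s = xs!q" using assms sx by (auto simp: in_set_conv_nth)
  have c: "card {u \<in> A. u < s} = q" using card_less_strict_sorted_nth[OF sx(2) q(1)] q sx by simp
  show "sorted_list_of_set A ! card {u \<in> A. u < s} = s" using c q by (simp add: xs_def)
  show "card {u \<in> A. u < s} < card A" using c q by (simp add: xs_def)
qed

lemma finite_comps [simp]: "finite (comps r s)"
proof -
  have "comps r s \<subseteq> {xs. set xs \<subseteq> {..s} \<and> length xs = r}"
    by (auto simp: comps_def member_le_sum_list)
  thus ?thesis by (rule finite_subset) (intro finite_lists_length_eq, simp)
qed

lemma sum_comps: "ls \<in> comps n s \<Longrightarrow> (\<Sum>j<n. ls!j) = s"
  by (auto simp: comps_def sum_list_sum_nth atLeast0LessThan)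

lemma finite_tuple_families [simp]: "finite (tuple_families k i)"
proof -
  define X where "X = {xs. set xs \<subseteq> {..i} \<and> length xs \<le> Max (insert 0 (set k))}"
  have "finite X" unfolding X_def by (rule finite_lists_length_le) simp
  moreover have "t \<in> X" if ts: "ts \<in> tuple_families k i" and t: "t \<in> set ts" for ts t
  proof -
    obtain j where j: "j < length k" "t = ts!j" using ts t by (auto simp: in_set_conv_nth tuple_families_def)
    have "length t \<le> k!j" using ts j by (auto simp: tuple_families_def)
    also have "k!j \<le> Max (insert 0 (set k))" using j by (intro Max_ge) auto
    finally have "length t \<le> Max (insert 0 (set k))" .
    moreover have "sum_list t \<le> i"
      using member_le_sum_list[of "sum_list t" "map sum_list ts"] t ts by (auto simp: tuple_families_def)
    hence "set t \<subseteq> {..i}" using member_le_sum_list[of _ t] by fastforce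
    ultimately show ?thesis by (simp add: X_def)
  qed
  hence "tuple_families k i \<subseteq> {ts. set ts \<subseteq> X \<and> length ts = length k}"
    by (auto simp: tuple_families_def)
  ultimately show ?thesis by (metis finite_subset finite_lists_length_eq)
qed

section \<open>The summand of \<open>Z\<close>\<close>

definition Z_exponent :: "nat list \<Rightarrow> nat \<Rightarrow> nat" where
  "Z_exponent k j = k ! j - (if j = length k - 1 then 1 else 0)"

definition poch_ratio :: "'a::field_char_0 \<Rightarrow> nat list \<Rightarrow> 'a" where
  "poch_ratio a m = of_nat (fact (last m)) / of_nat (fact (m ! 0)) / (\<Prod>t\<in>{m!0..last m}. of_nat t + a)"

lemma Z_exponent_pos:
  assumes "admissible k" "j < length k" shows "1 \<le> Z_exponent k j"
proof (cases "j = length k - 1")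
  case True
  hence "k ! j = last k" using assms by (simp add: admissible_def last_conv_nth)
  thus ?thesis using assms True by (auto simp: admissible_def Z_exponent_def)
next
  case False
  have "0 < k ! j" using assms by (auto simp: admissible_def)
  thus ?thesis using False by (simp add: Z_exponent_def)
qed

lemma pochhammer_Suc_split:
  fixes a :: "'a::comm_semiring_1"
  assumes "m0 \<le> L"
  shows "pochhammer a (Suc L) = pochhammer a m0 * (\<Prod>t\<in>{m0..L}. of_nat t + a)"
proof -
  have "pochhammer a (Suc L) = pochhammer a m0 * pochhammer (a + of_nat m0) (Suc L - m0)"
    using assms by (intro pochhammer_product) auto
  also have "pochhammer (a + of_nat m0) (Suc L - m0) = (\<Prod>i=0..<Suc L - m0. a + of_nat m0 + of_nat i)"
    by (rule pochhammer_prod)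
  also have "\<dots> = (\<Prod>i=0+m0..<(Suc L - m0)+m0. a + of_nat i)"
    by (subst prod.shift_bounds_nat_ivl) (simp add: add_ac)
  also have "\<dots> = (\<Prod>t\<in>{m0..L}. of_nat t + a)"
    using assms by (intro prod.cong) (auto simp: add_ac)
  finally show ?thesis .
qed

lemma pochhammer_nonzero_if_Re_pos:
  fixes a :: complex
  assumes "0 < Re a" shows "pochhammer a n \<noteq> 0"
  using assms by (auto simp: pochhammer_eq_0_iff)

lemma incr_tuplesD:
  assumes "m \<in> incr_tuples n" "0 < n"
  shows "length m = n" "sorted_wrt (<) m" "m \<noteq> []" "last m = m ! (n - 1)" "m!0 \<le> last m"
proof -
  show ln: "length m = n" "sorted_wrt (<) m" using assms by (auto simp: incr_tuples_def)
  thus "m \<noteq> []" "last m = m ! (n - 1)" using assms by (auto simp: last_conv_nth)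
  thus "m!0 \<le> last m" using ln assms by (auto intro: strict_sorted_nth_mono)
qed

lemma Z_term_eq_poch_ratio:
  assumes len: "length m = length k" and ne: "k \<noteq> []" and le: "m!0 \<le> last m"
    and p0: "pochhammer a (m!0) \<noteq> 0"
  shows "Z_term k a b m = poch_ratio a m * (\<Prod>j<length k. 1 / (of_nat (m!j) + b) ^ Z_exponent k j)"
proof -
  define n where "n = length k"
  have n: "n = Suc (n - 1)" using ne n_def by (cases k) auto
  have "m \<noteq> []" using len ne by auto
  hence lm: "last m = m ! (n-1)" using len n_def by (simp add: last_conv_nth)
  have lk: "last k = k ! (n-1)" using ne n_def by (simp add: last_conv_nth)
  have "(\<Prod>j<n. 1 / (of_nat (m!j) + b) ^ Z_exponent k j)
     = (\<Prod>j<n-1. 1 / (of_nat (m!j) + b) ^ Z_exponent k j) * (1 / (of_nat (m!(n-1)) + b) ^ Z_exponent k (n-1))"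
    by (subst n) (simp add: lessThan_Suc mult.commute)
  also have "(\<Prod>j<n-1. 1 / (of_nat (m!j) + b) ^ Z_exponent k j) = (\<Prod>j<n-1. 1 / (of_nat (m!j) + b) ^ (k!j))"
    by (intro prod.cong) (auto simp: Z_exponent_def n_def)
  finally have pr: "(\<Prod>j<n. 1 / (of_nat (m!j) + b) ^ Z_exponent k j) =
     (\<Prod>j<n-1. 1 / (of_nat (m!j) + b) ^ (k!j)) * (1 / (of_nat (last m) + b) ^ (last k - 1))"
    using lm lk by (simp add: Z_exponent_def n_def)
  have "pochhammer a (last m + 1) = pochhammer a (m!0) * (\<Prod>t\<in>{m!0..last m}. of_nat t + a)"
    using pochhammer_Suc_split[OF le] by simp
  thus ?thesis
    unfolding Z_term_def n_def[symmetric] pr poch_ratio_def using p0 by (simp add: field_simps)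
qed

lemma poch_ratio_pos:
  fixes g :: real assumes "0 < g" shows "0 < poch_ratio g m"
  using assms unfolding poch_ratio_def by (intro divide_pos_pos prod_pos) auto

lemma poch_ratio_antimono:
  fixes a g :: real assumes "0 < g" "g \<le> a"
  shows "poch_ratio a m \<le> poch_ratio g m"
  unfolding poch_ratio_def using assms
  by (intro divide_left_mono prod_mono conjI mult_pos_pos prod_pos) auto

lemma norm_poch_ratio_le:
  fixes a :: complex assumes "0 < Re a"
  shows "norm (poch_ratio a m) \<le> poch_ratio (Re a) m"
proof -
  have "norm (poch_ratio a m) = real (fact (last m)) / real (fact (m!0)) / (\<Prod>t\<in>{m!0..last m}. norm (of_nat t + a))"
    unfolding poch_ratio_def by (simp add: norm_divide prod_norm norm_mult)
  also have "\<dots> \<le> real (fact (last m)) / real (fact (m!0)) / (\<Prod>t\<in>{m!0..last m}. of_nat t + Re a)"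
    using assms complex_Re_le_cmod[of "of_nat _ + a"]
    by (intro divide_left_mono prod_mono conjI mult_pos_pos prod_pos)
       (auto intro: add_nonneg_pos simp: complex_eq_iff)
  also have "\<dots> = poch_ratio (Re a) m" unfolding poch_ratio_def by simp
  finally show ?thesis .
qed

section \<open>A summable majorant\<close>

definition Z_majorant :: "nat list \<Rightarrow> real \<Rightarrow> nat list \<Rightarrow> real" where
  "Z_majorant k g m = poch_ratio g m * (\<Prod>j<length k. 1 / (of_nat (m!j) + g) ^ Z_exponent k j)"

lemma Z_majorant_nonneg: "0 < g \<Longrightarrow> 0 \<le> Z_majorant k g m"
  unfolding Z_majorant_def using poch_ratio_pos[of g m] by (intro mult_nonneg_nonneg prod_nonneg) auto

lemma norm_shift_bounds:
  fixes \<alpha> \<beta> :: complex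
  assumes "cmod (\<beta> - \<alpha>) < Re \<alpha>"
  shows "real t + (Re \<alpha> - cmod (\<alpha> - \<beta>)) \<le> cmod (of_nat t + \<alpha>) - cmod (\<alpha> - \<beta>)"
    and "cmod (\<alpha> - \<beta>) < cmod (of_nat t + \<alpha>)"
    and "0 < Re \<alpha> - cmod (\<alpha> - \<beta>)"
proof -
  have "Re (of_nat t + \<alpha>) \<le> cmod (of_nat t + \<alpha>)" by (rule complex_Re_le_cmod)
  hence r: "real t + Re \<alpha> \<le> cmod (of_nat t + \<alpha>)" by simp
  have e: "cmod (\<alpha> - \<beta>) = cmod (\<beta> - \<alpha>)" by (simp add: norm_minus_commute)
  show "real t + (Re \<alpha> - cmod (\<alpha> - \<beta>)) \<le> cmod (of_nat t + \<alpha>) - cmod (\<alpha> - \<beta>)" using r by simp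
  show "cmod (\<alpha> - \<beta>) < cmod (of_nat t + \<alpha>)" using r e assms by simp
  show "0 < Re \<alpha> - cmod (\<alpha> - \<beta>)" using e assms by simp
qed

lemma ratio_add_power_le:
  fixes g :: real and t q :: nat
  assumes g0: "0 < g" and qg: "1 \<le> real q * g" and t1: "1 \<le> t"
  shows "(real t / (real t + g)) ^ q \<le> real t / (real t + 1)"
proof -
  have tp: "0 < real t" using t1 by simp
  have "1 + 1 / real t \<le> 1 + real q * (g / real t)"
    using qg tp by (simp add: divide_right_mono)
  also have "\<dots> \<le> (1 + g / real t) ^ q"
    by (rule Bernoulli_inequality) (use g0 tp in \<open>simp add: order.trans[OF _ divide_nonneg_pos]\<close>)
  finally have b: "1 + 1 / real t \<le> (1 + g / real t) ^ q" .
  have e1: "real t / (real t + g) = 1 / (1 + g / real t)" using tp by (simp add: field_simps)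
  have e2: "real t / (real t + 1) = 1 / (1 + 1 / real t)" using tp by (simp add: field_simps)
  show ?thesis unfolding e1 e2 power_one_over
    by (rule divide_left_mono[OF b]) (use tp g0 in \<open>auto intro!: mult_pos_pos zero_less_power add_pos_pos\<close>)
qed

text \<open>By induction on \<open>b\<close>: each new factor \<open>(b+1)/(b+1+g)\<close> is, after raising to the power \<open>q\<close>,
  at most \<open>(b+1)/(b+2)\<close>, and these ratios telescope.\<close>

lemma fact_div_prod_power_le:
  fixes g :: real and q a b :: nat
  assumes g0: "0 < g" and qg: "1 \<le> real q * g" and ab: "a \<le> b"
  shows "(real (fact b) / real (fact a) / (\<Prod>t\<in>{a..b}. real t + g) * (real a + g)) ^ q
           \<le> (real a + 1) / (real b + 1)"
  using ab
proof (induction b rule: dec_induct)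
  case base
  thus ?case using g0 by (simp add: add_pos_pos)
next
  case (step b)
  define Q where "Q = real (fact b) / real (fact a) / (\<Prod>t\<in>{a..b}. real t + g) * (real a + g)"
  have Q0: "0 \<le> Q" unfolding Q_def using g0 by (intro mult_nonneg_nonneg divide_nonneg_nonneg prod_nonneg) auto
  have ins: "{a..Suc b} = insert (Suc b) {a..b}" using step by auto
  have "real (fact (Suc b)) / real (fact a) / (\<Prod>t\<in>{a..Suc b}. real t + g) * (real a + g)
        = Q * (real (Suc b) / (real (Suc b) + g))"
    unfolding Q_def ins using step by (simp add: field_simps)
  hence "(real (fact (Suc b)) / real (fact a) / (\<Prod>t\<in>{a..Suc b}. real t + g) * (real a + g)) ^ q
        = Q ^ q * (real (Suc b) / (real (Suc b) + g)) ^ q" by (simp only: power_mult_distrib)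
  also have "\<dots> \<le> (real a + 1) / (real b + 1) * (real (Suc b) / (real (Suc b) + 1))"
    by (intro mult_mono ratio_add_power_le) (use step.IH Q_def g0 qg Q0 in auto)
  also have "\<dots> = (real a + 1) / (real (Suc b) + 1)"
  proof -
    have "real b + 1 \<noteq> 0" "real b + 1 + 1 \<noteq> 0" by linarith+
    thus ?thesis by (simp add: divide_simps)
  qed
  finally show ?case .
qed

lemma inverse_add_le_max:
  fixes g :: real assumes g0: "0 < g"
  shows "1 / (real t + g) \<le> max 1 (1/g) / (real t + 1)"
proof -
  have "real t + 1 \<le> max 1 (1/g) * (real t + g)"
  proof (cases "1 \<le> g")
    case True
    thus ?thesis using g0 mult_right_mono[of 1 "max 1 (1/g)" "real t + g"] by simp
  next
    case False
    hence "g * real t \<le> real t" using g0 by (intro mult_left_le_one_le) auto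
    hence "real t + 1 \<le> (1/g) * (real t + g)" using g0 by (simp add: field_simps)
    thus ?thesis using g0 False by (simp add: max_def)
  qed
  thus ?thesis using g0 by (simp add: field_simps)
qed

lemma prod_inverse_add_power_le:
  fixes g :: real
  assumes g0: "0 < g" and K: "\<And>j. j < n \<Longrightarrow> 1 \<le> K j"
  shows "(\<Prod>j<n. 1 / (real (m!j) + g) ^ K j)
           \<le> max 1 (1/g) ^ (\<Sum>j<n. K j) * (\<Prod>j<n. 1 / (real (m!j) + 1))"
proof -
  define C where "C = max 1 (1/g)"
  have "1 / (real t + g) ^ K j \<le> C ^ K j / (real t + 1)" if j: "j < n" for j t
  proof -
    have "1 / (real t + g) ^ K j = (1 / (real t + g)) ^ K j" by (simp add: power_one_over)
    also have "\<dots> \<le> (C / (real t + 1)) ^ K j"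
      by (intro power_mono) (use inverse_add_le_max[OF g0, of t] g0 in \<open>auto simp: C_def\<close>)
    also have "\<dots> = C ^ K j / (real t + 1) ^ K j" by (simp add: power_divide)
    also have "\<dots> \<le> C ^ K j / (real t + 1)"
      by (intro divide_left_mono self_le_power mult_pos_pos) (use K[OF j] in \<open>auto simp: C_def\<close>)
    finally show ?thesis .
  qed
  hence "(\<Prod>j<n. 1 / (real (m!j) + g) ^ K j) \<le> (\<Prod>j<n. C ^ K j / (real (m!j) + 1))"
    using g0 by (intro prod_mono) auto
  also have "\<dots> = C ^ (\<Sum>j<n. K j) * (\<Prod>j<n. 1 / (real (m!j) + 1))"
    by (simp add: prod.distrib[symmetric] power_sum)
  finally show ?thesis by (simp add: C_def)
qed

lemma poch_ratio_le_powr: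
  fixes g :: real and q :: nat
  assumes g0: "0 < g" and qg: "1 \<le> real q * g" and q0: "0 < q" and le: "m!0 \<le> last m"
  shows "poch_ratio g m \<le> max 1 (1/g) / (real (m!0) + 1)
           * ((real (m!0) + 1) / (real (last m) + 1)) powr (1 / real q)"
proof -
  define Y where "Y = poch_ratio g m * (real (m!0) + g)"
  have Y0: "0 < Y" unfolding Y_def using poch_ratio_pos[OF g0, of m] g0 by (intro mult_pos_pos) auto
  have "Y = (Y ^ q) powr (1 / real q)"
    using Y0 q0 by (simp add: powr_realpow[symmetric] powr_powr)
  also have "\<dots> \<le> ((real (m!0) + 1) / (real (last m) + 1)) powr (1 / real q)"
    using fact_div_prod_power_le[OF g0 qg le] Y0 unfolding Y_def poch_ratio_def
    by (intro powr_mono2) auto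
  finally have "poch_ratio g m \<le> ((real (m!0) + 1) / (real (last m) + 1)) powr (1 / real q) * (1 / (real (m!0) + g))"
    using g0 by (simp add: Y_def field_simps)
  also have "\<dots> \<le> ((real (m!0) + 1) / (real (last m) + 1)) powr (1 / real q) * (max 1 (1/g) / (real (m!0) + 1))"
    by (intro mult_left_mono inverse_add_le_max[OF g0]) auto
  finally show ?thesis by (simp add: mult.commute)
qed

lemma prod_powr_strict_sorted_le:
  fixes e :: real
  assumes "sorted_wrt (<) m" "length m = n" "0 < n" "0 \<le> e"
  shows "(\<Prod>j<n. (real (m!j) + 1) powr e)
           \<le> (real (m!0) + 1) powr e * (real (m!(n-1)) + 1) powr (real (n - 1) * e)"
proof -
  have "(\<Prod>j<n. (real (m!j) + 1) powr e) = (real (m!0) + 1) powr e * (\<Prod>j<n-1. (real (m!Suc j) + 1) powr e)"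
    using assms(3) by (subst Suc_pred'[OF assms(3)]) (simp only: prod.lessThan_Suc_shift)
  also have "(\<Prod>j<n-1. (real (m!Suc j) + 1) powr e) \<le> (\<Prod>j<n-1. (real (m!(n-1)) + 1) powr e)"
    using assms by (intro prod_mono conjI powr_mono2) (auto intro: strict_sorted_nth_mono)
  also have "\<dots> = (real (m!(n-1)) + 1) powr (real (n - 1) * e)"
    by (simp add: powr_power)
  finally show ?thesis by (simp add: mult_left_mono)
qed

lemma powr_ratio_mult_le:
  fixes A B c e d :: real
  assumes "1 \<le> A" "1 \<le> B" "c + e \<le> 1" "d \<le> c"
  shows "(A / B) powr c * (A powr e * B powr d) \<le> A"
proof -
  have "(A / B) powr c * (A powr e * B powr d) = A powr (c + e) * (B powr d / B powr c)"
    using assms by (simp add: powr_divide powr_add field_simps)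
  also have "\<dots> \<le> A powr 1 * 1"
    using assms powr_mono[of d c B] by (intro mult_mono powr_mono) (auto simp: divide_le_eq_1)
  finally show ?thesis using assms by simp
qed

lemma Z_majorant_le:
  fixes g :: real
  assumes adm: "admissible k" and g0: "0 < g" and q2: "2 \<le> q" and qg: "1 \<le> real q * g"
    and m: "m \<in> incr_tuples (length k)"
  shows "Z_majorant k g m \<le> max 1 (1/g) ^ Suc (\<Sum>j<length k. Z_exponent k j) *
           (\<Prod>j<length k. (real (m!j) + 1) powr (-1 - 1 / (real q * real (length k))))"
proof -
  define n where "n = length k"
  define C where "C = max 1 (1/g)"
  define c where "c = 1 / real q"
  define e where "e = c / real n"
  define A where "A = real (m!0) + 1"
  define B where "B = real (last m) + 1"
  define \<Sigma> where "\<Sigma> = (\<Sum>j<n. Z_exponent k j)"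
  define P1 where "P1 = (\<Prod>j<n. (real (m!j) + 1) powr (-1-e))"
  define P2 where "P2 = (\<Prod>j<n. (real (m!j) + 1) powr e)"
  have n0: "0 < n" using adm by (simp add: admissible_def n_def)
  note mf = incr_tuplesD[OF m[folded n_def] n0]
  have c0: "0 < c" and c2: "c \<le> 1/2" using q2 by (auto simp: c_def field_simps)
  have e0: "0 < e" and ec: "e \<le> c" and ne: "real (n - 1) * e \<le> c"
    using c0 n0 by (auto simp: e_def field_simps)
  have A1: "1 \<le> A" and B1: "1 \<le> B" and C1: "1 \<le> C" by (simp_all add: A_def B_def C_def)
  have P1_0: "0 \<le> P1" unfolding P1_def by (intro prod_nonneg) auto
  have inv_split: "(\<Prod>j<n. 1 / (real (m!j) + 1)) = P1 * P2"
    unfolding P1_def P2_def prod.distrib[symmetric]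
    by (intro prod.cong refl) (simp add: powr_add[symmetric] powr_neg_one)
  have P2: "P2 \<le> A powr e * B powr (real (n - 1) * e)"
    unfolding P2_def A_def B_def mf(4) using prod_powr_strict_sorted_le[OF mf(2,1) n0] e0 by simp
  have "Z_majorant k g m \<le> (C / A * (A / B) powr c) * (C ^ \<Sigma> * (P1 * P2))"
    unfolding Z_majorant_def n_def[symmetric] inv_split[symmetric] \<Sigma>_def
    using poch_ratio_le_powr[OF g0 qg _ mf(5)] prod_inverse_add_power_le[OF g0 Z_exponent_pos[OF adm]]
      q2 C1 A1 g0
    by (intro mult_mono) (auto simp: C_def A_def B_def c_def n_def intro!: prod_nonneg)
  also have "\<dots> = C ^ \<Sigma> * P1 * (C / A * ((A / B) powr c * P2))" by (simp add: ac_simps)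
  also have "\<dots> \<le> C ^ \<Sigma> * P1 * (C / A * A)"
    using C1 A1 P1_0 P2 powr_ratio_mult_le[OF A1 B1 _ ne] ec c2
    by (intro mult_left_mono order.trans[OF mult_left_mono[OF P2]]) auto
  also have "\<dots> = C ^ Suc \<Sigma> * P1" using A1 by simp
  finally show ?thesis by (simp add: C_def \<Sigma>_def P1_def e_def c_def n_def)
qed

lemma summable_on_shifted_powr:
  fixes e :: real assumes "0 < e"
  shows "(\<lambda>t::nat. (real t + 1) powr (-1-e)) summable_on UNIV"
proof -
  have "summable (\<lambda>t::nat. real t powr (-1-e))" using assms by (simp add: summable_real_powr_iff)
  hence "summable (\<lambda>t::nat. real (t + 1) powr (-1-e))" by (subst summable_iff_shift) simp
  thus ?thesis by (intro summable_nonneg_imp_summable_on) (simp_all add: add.commute)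
qed

lemma summable_on_lists_prod_shifted_powr:
  fixes e :: real assumes "0 < e"
  shows "(\<lambda>m. \<Prod>j<n. (real (m!j) + 1) powr (-1-e)) summable_on {m. length m = n}"
proof -
  define h where "h g = map g [0..<n]" for g :: "nat \<Rightarrow> nat"
  define D where "D = PiE {..<n} (\<lambda>_. UNIV :: nat set)"
  have "(\<lambda>g. norm (\<Prod>j<n. (real (g j) + 1) powr (-1-e))) summable_on D"
    unfolding D_def using summable_on_shifted_powr[OF assms]
    by (intro norm_prod_summable_on_PiE) auto
  moreover have "norm (\<Prod>j<n. (real (g j) + 1) powr (-1-e)) = (\<Prod>j<n. (real (g j) + 1) powr (-1-e))" for g
    unfolding real_norm_def by (intro abs_of_nonneg prod_nonneg) auto
  ultimately have s: "(\<lambda>g. \<Prod>j<n. (real (g j) + 1) powr (-1-e)) summable_on D"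
    by simp
  have inj: "inj_on h D"
  proof (rule inj_onI, rule ext)
    fix f g j assume f: "f \<in> D" and g: "g \<in> D" and eq: "h f = h g"
    show "f j = g j"
    proof (cases "j < n")
      case True
      hence "f j = h f ! j" "g j = h g ! j" by (simp_all add: h_def)
      thus ?thesis using eq by simp
    next
      case False
      thus ?thesis using f g by (simp add: D_def PiE_def extensional_def)
    qed
  qed
  have im: "h ` D = {m. length m = n}"
  proof (intro equalityI subsetI)
    fix m :: "nat list" assume "m \<in> {m. length m = n}"
    hence "m = h (restrict (\<lambda>j. m!j) {..<n})" unfolding h_def by (intro nth_equalityI) auto
    moreover have "restrict (\<lambda>j. m!j) {..<n} \<in> D" by (simp add: D_def)
    ultimately show "m \<in> h ` D" by (rule image_eqI)
  qed (auto simp: h_def)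
  have "(\<lambda>m. \<Prod>j<n. (real (m!j) + 1) powr (-1-e)) \<circ> h = (\<lambda>g. \<Prod>j<n. (real (g j) + 1) powr (-1-e))"
    by (simp add: h_def fun_eq_iff)
  thus ?thesis using s summable_on_reindex[OF inj] im by metis
qed

lemma Z_majorant_summable:
  fixes g :: real
  assumes adm: "admissible k" and g0: "0 < g"
  shows "Z_majorant k g summable_on incr_tuples (length k)"
proof -
  define q where "q = max 2 (nat \<lceil>1/g\<rceil>)"
  define e where "e = 1 / (real q * real (length k))"
  define D where "D = max 1 (1/g) ^ Suc (\<Sum>j<length k. Z_exponent k j)"
  have q2: "2 \<le> q" by (simp add: q_def)
  have "1/g \<le> real q" unfolding q_def by linarith
  hence qg: "1 \<le> real q * g" using g0 by (simp add: field_simps)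
  have e0: "0 < e" using q2 adm by (simp add: e_def admissible_def)
  have "(\<lambda>m. \<Prod>j<length k. (real (m!j) + 1) powr (-1-e)) summable_on incr_tuples (length k)"
    using summable_on_lists_prod_shifted_powr[OF e0]
    by (rule summable_on_subset) (auto simp: incr_tuples_def)
  hence "(\<lambda>m. D * (\<Prod>j<length k. (real (m!j) + 1) powr (-1-e))) summable_on incr_tuples (length k)"
    by (rule summable_on_cmult_right)
  thus ?thesis
  proof (rule summable_on_comparison_test)
    fix m assume "m \<in> incr_tuples (length k)"
    from Z_majorant_le[OF adm g0 q2 qg this]
    show "Z_majorant k g m \<le> D * (\<Prod>j<length k. (real (m!j) + 1) powr (-1-e))"
      by (simp add: D_def e_def)
  qed (rule Z_majorant_nonneg[OF g0])
qed

lemma has_sum_Sigma_incr_tuples: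
  fixes F :: "nat list \<Rightarrow> 'b \<Rightarrow> complex"
  assumes "admissible k" and "cmod (\<beta> - \<alpha>) < Re \<alpha>"
    and "\<And>m. m \<in> incr_tuples (length k) \<Longrightarrow> (F m has_sum Z_term k \<gamma> \<delta> m) (B m)"
    and "\<And>m. m \<in> incr_tuples (length k) \<Longrightarrow> (\<lambda>y. norm (F m y)) summable_on B m"
    and "\<And>m. m \<in> incr_tuples (length k) \<Longrightarrow>
           infsum (\<lambda>y. norm (F m y)) (B m) \<le> Z_majorant k (Re \<alpha> - cmod (\<alpha> - \<beta>)) m"
  shows "((\<lambda>(m,y). F m y) has_sum Z k \<gamma> \<delta>) (Sigma (incr_tuples (length k)) B)"
  unfolding Z_def using assms norm_shift_bounds(3)[OF assms(2)]
  by (intro has_sum_Sigma_dominated[where R="Z_majorant k (Re \<alpha> - cmod (\<alpha> - \<beta>))"] Z_majorant_summable)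

section \<open>Expansion in the second argument\<close>

definition exponent_slots :: "nat list \<Rightarrow> (nat \<times> nat) set" where
  "exponent_slots k = Sigma {..<length k} (\<lambda>j. {..<Z_exponent k j})"

lemma finite_exponent_slots [simp]: "finite (exponent_slots k)"
  by (simp add: exponent_slots_def)

lemma prod_exponent_slots:
  "(\<Prod>jp\<in>exponent_slots k. f jp) = (\<Prod>j<length k. \<Prod>p<Z_exponent k j. f (j,p))"
  unfolding exponent_slots_def by (subst prod.Sigma) auto

text \<open>Each of the \<open>Z_exponent k j\<close> factors \<open>1/(m\<^sub>j + \<beta>)\<close> of \<open>Z_term k \<alpha> \<beta> m\<close> is expanded as
  \<open>\<Sum>d. (\<alpha>-\<beta>)\<^sup>d/(m\<^sub>j + \<alpha>)\<^sup>d\<^sup>+\<^sup>1\<close>; the slot \<open>(j,p)\<close> records the summation index \<open>c (j,p)\<close> of the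
  \<open>p\<close>-th of them.\<close>

definition second_expansion_term :: "nat list \<Rightarrow> complex \<Rightarrow> complex \<Rightarrow> nat list \<Rightarrow> (nat \<times> nat \<Rightarrow> nat) \<Rightarrow> complex" where
  "second_expansion_term k \<alpha> \<beta> m c =
     poch_ratio \<alpha> m * (\<Prod>(j,p)\<in>exponent_slots k. (\<alpha> - \<beta>) ^ c (j,p) / (of_nat (m!j) + \<alpha>) ^ Suc (c (j,p)))"

lemma second_expansion_term_has_sum:
  fixes \<alpha> \<beta> :: complex
  assumes adm: "admissible k" and ra: "0 < Re \<alpha>" and rb: "cmod (\<beta> - \<alpha>) < Re \<alpha>"
    and m: "m \<in> incr_tuples (length k)"
  defines "C \<equiv> PiE (exponent_slots k) (\<lambda>_. UNIV)"
  shows "(second_expansion_term k \<alpha> \<beta> m has_sum Z_term k \<alpha> \<beta> m) C"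
    and "(\<lambda>c. norm (second_expansion_term k \<alpha> \<beta> m c)) summable_on C"
    and "infsum (\<lambda>c. norm (second_expansion_term k \<alpha> \<beta> m c)) C \<le> Z_majorant k (Re \<alpha> - cmod (\<alpha> - \<beta>)) m"
proof -
  define x where "x = \<alpha> - \<beta>"
  define g where "g = Re \<alpha> - cmod x"
  define n where "n = length k"
  define z where "z jp = of_nat (m ! fst jp) + \<alpha>" for jp :: "nat \<times> nat"
  have n0: "0 < n" using adm by (simp add: admissible_def n_def)
  note mf = incr_tuplesD[OF m[folded n_def] n0]
  note bounds = norm_shift_bounds[OF rb, folded x_def, folded g_def]
  have term_eq: "second_expansion_term k \<alpha> \<beta> m c = poch_ratio \<alpha> m * (\<Prod>s\<in>exponent_slots k. x ^ c s / z s ^ Suc (c s))" for c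
    by (simp add: second_expansion_term_def x_def z_def case_prod_unfold)
  have "(\<Prod>s\<in>exponent_slots k. 1 / (z s - x)) = (\<Prod>j<n. 1 / (of_nat (m!j) + \<beta>) ^ Z_exponent k j)"
    by (simp add: prod_exponent_slots n_def z_def x_def power_one_over)
  moreover have "Z_term k \<alpha> \<beta> m = poch_ratio \<alpha> m * (\<Prod>j<n. 1 / (of_nat (m!j) + \<beta>) ^ Z_exponent k j)"
    unfolding n_def using mf adm pochhammer_nonzero_if_Re_pos[OF ra]
    by (intro Z_term_eq_poch_ratio) (auto simp: admissible_def n_def)
  ultimately have val: "Z_term k \<alpha> \<beta> m = poch_ratio \<alpha> m * (\<Prod>s\<in>exponent_slots k. 1 / (z s - x))"
    by simp
  show "(second_expansion_term k \<alpha> \<beta> m has_sum Z_term k \<alpha> \<beta> m) C"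
    unfolding term_eq C_def val using bounds(2)
    by (intro has_sum_cmult_right has_sum_prod_geometric_PiE) (auto simp: z_def)
  define N where "N = norm (poch_ratio \<alpha> m) * (\<Prod>s\<in>exponent_slots k. 1 / (norm (z s) - norm x))"
  have hn: "((\<lambda>c. norm (second_expansion_term k \<alpha> \<beta> m c)) has_sum N) C"
    unfolding N_def term_eq norm_mult prod_norm[symmetric] norm_geometric_term C_def using bounds(2)
    by (intro has_sum_cmult_right has_sum_prod_geometric_PiE) (auto simp: z_def)
  thus "(\<lambda>c. norm (second_expansion_term k \<alpha> \<beta> m c)) summable_on C"
    by (rule has_sum_imp_summable)
  have "1 / (norm (z s) - norm x) \<le> 1 / (real (m ! fst s) + g)" for s
    using bounds(1)[of "m ! fst s"] bounds(3) by (intro divide_left_mono) (auto simp: z_def)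
  moreover have "0 \<le> 1 / (norm (z s) - norm x)" for s
    using bounds(2)[of "m ! fst s"] by (simp add: z_def)
  ultimately have "N \<le> poch_ratio g m * (\<Prod>s\<in>exponent_slots k. 1 / (real (m ! fst s) + g))"
    unfolding N_def using norm_poch_ratio_le[OF ra, of m] poch_ratio_antimono[OF bounds(3), of "Re \<alpha>" m]
      poch_ratio_pos[OF bounds(3), of m]
    by (intro mult_mono prod_mono conjI prod_nonneg) (auto simp: g_def)
  also have "\<dots> = Z_majorant k g m"
    by (simp add: Z_majorant_def prod_exponent_slots power_one_over)
  finally show "infsum (\<lambda>c. norm (second_expansion_term k \<alpha> \<beta> m c)) C \<le> Z_majorant k (Re \<alpha> - cmod (\<alpha> - \<beta>)) m"
    using hn by (simp add: has_sum_iff g_def x_def)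
qed

text \<open>Inverse of the regrouping: in block \<open>j\<close> the first \<open>Z_exponent k j - 1\<close> slots carry the tuple
  \<open>i\<^sup>(\<^sup>j\<^sup>)\<close> of \<open>raise_index\<close>, the last slot the \<open>j\<close>-th part of the composition in \<open>S\<close>.\<close>

definition slot_exponents :: "nat list \<Rightarrow> nat list list \<Rightarrow> nat list \<Rightarrow> nat \<times> nat \<Rightarrow> nat" where
  "slot_exponents k ts ls = (\<lambda>(j,p). if (j,p) \<in> exponent_slots k
      then (if p < Z_exponent k j - 1 then ts!j!p else ls!j) else undefined)"

definition second_index :: "nat list \<Rightarrow> nat \<Rightarrow> (nat \<times> (nat list list \<times> nat list)) set" where
  "second_index k l = Sigma {..l} (\<lambda>i. tuple_families k i \<times> comps (length k) (l - i))"

definition second_target :: "nat list \<Rightarrow> (nat \<times> ((nat \<times> (nat list list \<times> nat list)) \<times> nat list)) set" where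
  "second_target k = Sigma UNIV (\<lambda>l. second_index k l \<times> incr_tuples (length k))"

definition second_source :: "nat list \<Rightarrow> (nat list \<times> (nat \<times> nat \<Rightarrow> nat)) set" where
  "second_source k = Sigma (incr_tuples (length k)) (\<lambda>m. PiE (exponent_slots k) (\<lambda>_. UNIV))"

definition second_encode :: "nat list \<Rightarrow> nat list \<times> (nat \<times> nat \<Rightarrow> nat) \<Rightarrow>
    nat \<times> ((nat \<times> (nat list list \<times> nat list)) \<times> nat list)" where
  "second_encode k = (\<lambda>(m,c). ((\<Sum>j<length k. \<Sum>p<Z_exponent k j. c (j,p)),
      (((\<Sum>j<length k. \<Sum>p<Z_exponent k j - 1. c (j,p)),
        (map (\<lambda>j. map (\<lambda>p. c (j,p)) [0..<Z_exponent k j - 1]) [0..<length k],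
         map (\<lambda>j. c (j, Z_exponent k j - 1)) [0..<length k])), m)))"

definition second_decode :: "nat list \<Rightarrow> nat \<times> ((nat \<times> (nat list list \<times> nat list)) \<times> nat list) \<Rightarrow>
    nat list \<times> (nat \<times> nat \<Rightarrow> nat)" where
  "second_decode k = (\<lambda>(l,((i,(ts,ls)),m)). (m, slot_exponents k ts ls))"

lemma second_targetD:
  assumes "(l,((i,(ts,ls)),m)) \<in> second_target k"
  shows "i \<le> l" "ts \<in> tuple_families k i" "ls \<in> comps (length k) (l - i)" "m \<in> incr_tuples (length k)"
  using assms by (auto simp: second_target_def second_index_def)

lemma tuple_families_length:
  assumes "ts \<in> tuple_families k i"
  shows "length ts = length k" "\<And>j. j < length k \<Longrightarrow> length (ts!j) = Z_exponent k j - 1"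
    and "(\<Sum>j<length k. sum_list (ts!j)) = i"
  using assms by (auto simp: tuple_families_def Z_exponent_def sum_list_sum_nth[of "map sum_list ts"] atLeast0LessThan)

lemma slot_exponents_block_sum:
  assumes "admissible k" "j < length k" "length (ts!j) = Z_exponent k j - 1"
  shows "(\<Sum>p<Z_exponent k j - 1. slot_exponents k ts ls (j,p)) = sum_list (ts!j)"
    and "(\<Sum>p<Z_exponent k j. slot_exponents k ts ls (j,p)) = sum_list (ts!j) + ls!j"
proof -
  have K: "{..<Z_exponent k j} = insert (Z_exponent k j - 1) {..<Z_exponent k j - 1}"
    using Z_exponent_pos[OF assms(1,2)] by auto
  have "(\<Sum>p<Z_exponent k j - 1. slot_exponents k ts ls (j,p)) = (\<Sum>p<Z_exponent k j - 1. ts!j!p)"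
    using assms(2) by (intro sum.cong) (auto simp: slot_exponents_def exponent_slots_def)
  thus *: "(\<Sum>p<Z_exponent k j - 1. slot_exponents k ts ls (j,p)) = sum_list (ts!j)"
    using assms(3) by (simp add: sum_list_sum_nth atLeast0LessThan)
  show "(\<Sum>p<Z_exponent k j. slot_exponents k ts ls (j,p)) = sum_list (ts!j) + ls!j"
    unfolding K using * assms Z_exponent_pos[OF assms(1,2)] by (simp add: slot_exponents_def exponent_slots_def)
qed

lemma second_decode_inverse:
  assumes adm: "admissible k" and a: "a \<in> second_target k"
  shows "second_encode k (second_decode k a) = a" and "second_decode k a \<in> second_source k"
proof -
  obtain l i ts ls m where av: "a = (l,((i,(ts,ls)),m))" by (cases a) auto
  define n where "n = length k"
  define c where "c = slot_exponents k ts ls"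
  note mem = second_targetD[OF a[unfolded av]]
  note tf = tuple_families_length[OF mem(2), folded n_def]
  note blocks = slot_exponents_block_sum[OF adm _ tf(2), where ls=ls, folded n_def c_def]
  have lls: "length ls = n" using mem(3) by (simp add: comps_def n_def)
  have cjp: "c (j,p) = (if p < Z_exponent k j - 1 then ts!j!p else ls!j)" if "j < n" "p < Z_exponent k j" for j p
    using that by (simp add: c_def slot_exponents_def exponent_slots_def n_def)
  have "(\<Sum>j<n. \<Sum>p<Z_exponent k j. c (j,p)) = l"
    using blocks(2) tf(3) sum_comps[OF mem(3)] mem(1) by (simp add: sum.distrib n_def)
  moreover have "(\<Sum>j<n. \<Sum>p<Z_exponent k j - 1. c (j,p)) = i"
    using blocks(1) tf(3) by simp
  moreover have "map (\<lambda>j. map (\<lambda>p. c (j,p)) [0..<Z_exponent k j - 1]) [0..<n] = ts"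
    using tf(1,2) cjp by (intro nth_equalityI) (auto intro!: nth_equalityI simp: n_def)
  moreover have "c (j, Z_exponent k j - 1) = ls!j" if "j < n" for j
    using cjp[OF that, of "Z_exponent k j - 1"] Z_exponent_pos[OF adm, of j] that by (simp add: n_def)
  hence "map (\<lambda>j. c (j, Z_exponent k j - 1)) [0..<n] = ls"
    using lls by (intro nth_equalityI) auto
  ultimately show "second_encode k (second_decode k a) = a"
    by (simp add: second_encode_def second_decode_def av c_def n_def)
  show "second_decode k a \<in> second_source k"
    using mem(4) by (auto simp: second_decode_def second_source_def av slot_exponents_def PiE_def extensional_def)
qed

lemma second_encode_inverse:
  assumes adm: "admissible k" and b: "b \<in> second_source k"
  shows "second_decode k (second_encode k b) = b" and "second_encode k b \<in> second_target k"
proof -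
  obtain m c where bv: "b = (m, c)" by (cases b) auto
  have m: "m \<in> incr_tuples (length k)" and c: "c \<in> PiE (exponent_slots k) (\<lambda>_. UNIV)"
    using b by (auto simp: second_source_def bv)
  define n where "n = length k"
  define l where "l = (\<Sum>j<n. \<Sum>p<Z_exponent k j. c (j,p))"
  define i where "i = (\<Sum>j<n. \<Sum>p<Z_exponent k j - 1. c (j,p))"
  define ts where "ts = map (\<lambda>j. map (\<lambda>p. c (j,p)) [0..<Z_exponent k j - 1]) [0..<n]"
  define ls where "ls = map (\<lambda>j. c (j, Z_exponent k j - 1)) [0..<n]"
  have enc: "second_encode k b = (l, ((i, (ts, ls)), m))"
    by (simp add: second_encode_def bv l_def i_def ts_def ls_def n_def)
  have split: "(\<Sum>p<Z_exponent k j. c (j,p)) = (\<Sum>p<Z_exponent k j - 1. c (j,p)) + c (j, Z_exponent k j - 1)"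
    if "j < n" for j
  proof -
    have "{..<Z_exponent k j} = insert (Z_exponent k j - 1) {..<Z_exponent k j - 1}"
      using Z_exponent_pos[OF adm, of j] that n_def by auto
    thus ?thesis by (simp add: add.commute)
  qed
  have "slot_exponents k ts ls = c"
  proof (rule ext, clarify)
    fix j p
    show "slot_exponents k ts ls (j,p) = c (j,p)"
    proof (cases "(j,p) \<in> exponent_slots k")
      case True
      hence j: "j < n" and p: "p < Z_exponent k j" by (auto simp: exponent_slots_def n_def)
      show ?thesis
      proof (cases "p < Z_exponent k j - 1")
        case False
        with p have "p = Z_exponent k j - 1" by simp
        thus ?thesis using j True by (simp add: slot_exponents_def ls_def)
      qed (use j True in \<open>simp add: slot_exponents_def ts_def\<close>)
    next
      case False
      thus ?thesis using c by (auto simp: slot_exponents_def PiE_def extensional_def)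
    qed
  qed
  thus "second_decode k (second_encode k b) = b"
    unfolding enc by (simp add: second_decode_def bv)
  have "i \<le> l" unfolding i_def l_def using split by (auto intro!: sum_mono)
  moreover have "ts \<in> tuple_families k i"
    by (simp add: tuple_families_def ts_def i_def n_def Z_exponent_def sum_list_sum_nth atLeast0LessThan
        numeral_2_eq_2)
  moreover have "ls \<in> comps (length k) (l - i)"
    using split by (simp add: comps_def ls_def l_def i_def n_def sum_list_sum_nth atLeast0LessThan sum.distrib)
  ultimately show "second_encode k b \<in> second_target k"
    unfolding enc using m by (simp add: second_target_def second_index_def n_def)
qed

lemma second_expansion_term_decode:
  fixes \<alpha> \<beta> :: complex
  assumes adm: "admissible k" and ra: "0 < Re \<alpha>" and a: "(l,((i,(ts,ls)),m)) \<in> second_target k"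
  shows "second_expansion_term k \<alpha> \<beta> m (slot_exponents k ts ls)
           = (\<alpha> - \<beta>) ^ l * Z_term (map2 (+) (raise_index k ts) ls) \<alpha> \<alpha> m"
proof -
  define n where "n = length k"
  define x where "x = \<alpha> - \<beta>"
  define z where "z j = of_nat (m!j) + \<alpha>" for j
  define c where "c = slot_exponents k ts ls"
  define sj where "sj j = sum_list (ts!j) + ls!j" for j
  define k' where "k' = map2 (+) (raise_index k ts) ls"
  note mem = second_targetD[OF a]
  note tf = tuple_families_length[OF mem(2), folded n_def]
  note blocks = slot_exponents_block_sum[OF adm _ tf(2), where ls=ls, folded n_def c_def sj_def]
  have n0: "0 < n" using adm by (simp add: admissible_def n_def)
  note mf = incr_tuplesD[OF mem(4)[folded n_def] n0]
  have lls: "length ls = n" using mem(3) by (simp add: comps_def n_def)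
  have sl: "(\<Sum>j<n. sj j) = l" using tf(3) sum_comps[OF mem(3)] mem(1) by (simp add: sj_def sum.distrib n_def)
  have lk': "length k' = n" using tf(1) lls by (simp add: k'_def raise_index_def n_def)
  have "Z_exponent k' j = Z_exponent k j + sj j" if j: "j < n" for j
    using Z_exponent_pos[OF adm, of j] j tf(1) lls lk'
    by (auto simp: Z_exponent_def k'_def raise_index_def sj_def n_def)
  hence "(\<Prod>j<n. \<Prod>p<Z_exponent k j. x ^ c (j,p) / z j ^ Suc (c (j,p)))
      = (\<Prod>j<n. x ^ sj j * (1 / z j ^ Z_exponent k' j))"
    using prod_power_div_power_Suc[of "{..<Z_exponent k _}" x "\<lambda>p. c (_,p)"] blocks(2)
    by (intro prod.cong) auto
  also have "\<dots> = (\<Prod>j<n. x ^ sj j) * (\<Prod>j<n. 1 / z j ^ Z_exponent k' j)"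
    by (rule prod.distrib)
  also have "\<dots> = x ^ l * (\<Prod>j<length k'. 1 / (of_nat (m!j) + \<alpha>) ^ Z_exponent k' j)"
    by (simp add: power_sum[symmetric] sl lk' z_def)
  finally have "second_expansion_term k \<alpha> \<beta> m c
      = x ^ l * (poch_ratio \<alpha> m * (\<Prod>j<length k'. 1 / (of_nat (m!j) + \<alpha>) ^ Z_exponent k' j))"
    by (simp add: second_expansion_term_def prod_exponent_slots x_def z_def n_def ac_simps)
  also have "poch_ratio \<alpha> m * (\<Prod>j<length k'. 1 / (of_nat (m!j) + \<alpha>) ^ Z_exponent k' j) = Z_term k' \<alpha> \<alpha> m"
    using mf lk' n0 pochhammer_nonzero_if_Re_pos[OF ra] by (intro Z_term_eq_poch_ratio[symmetric]) auto
  finally show ?thesis by (simp add: c_def k'_def x_def)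
qed

lemma Z_second_argument_expansion:
  fixes \<alpha> \<beta> :: complex
  assumes adm: "admissible k" and ra: "0 < Re \<alpha>" and rb: "cmod (\<beta> - \<alpha>) < Re \<alpha>"
  shows "(\<lambda>l. (\<alpha> - \<beta>) ^ l * (\<Sum>i\<le>l. \<Sum>ts\<in>tuple_families k i.
             S (l - i) (raise_index k ts) \<alpha>)) sums Z k \<alpha> \<beta>"
proof -
  define Y where "Y = (\<lambda>(j::nat \<times> (nat list list \<times> nat list)) m.
    case j of (i,(ts,ls)) \<Rightarrow> Z_term (map2 (+) (raise_index k ts) ls) \<alpha> \<alpha> m)"
  define H where "H = (\<lambda>(l, (j, m)). (\<alpha> - \<beta>) ^ l * Y j m)"
  have "((\<lambda>(m,c). second_expansion_term k \<alpha> \<beta> m c) has_sum Z k \<alpha> \<beta>) (second_source k)"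
    unfolding second_source_def
    by (rule has_sum_Sigma_incr_tuples[OF adm rb]) (use second_expansion_term_has_sum[OF adm ra rb] in auto)
  hence "(H has_sum Z k \<alpha> \<beta>) (second_target k)"
    using has_sum_reindex_bij_witness[of "second_target k" "second_encode k" "second_decode k"
            "second_source k" "\<lambda>(m,c). second_expansion_term k \<alpha> \<beta> m c" H]
      second_decode_inverse[OF adm] second_encode_inverse[OF adm] second_expansion_term_decode[OF adm ra]
    by (force simp: H_def Y_def second_decode_def)
  hence "(\<lambda>l. (\<alpha> - \<beta>) ^ l * (\<Sum>j\<in>second_index k l. infsum (Y j) (incr_tuples (length k)))) sums Z k \<alpha> \<beta>"
    unfolding second_target_def by (rule sums_collect_powers) (auto simp: second_index_def H_def)
  moreover have "(\<Sum>j\<in>second_index k l. infsum (Y j) (incr_tuples (length k)))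
      = (\<Sum>i\<le>l. \<Sum>ts\<in>tuple_families k i. S (l - i) (raise_index k ts) \<alpha>)" for l
  proof -
    have "(\<Sum>j\<in>second_index k l. infsum (Y j) (incr_tuples (length k)))
        = (\<Sum>i\<le>l. \<Sum>ts\<in>tuple_families k i. \<Sum>ls\<in>comps (length k) (l - i).
             infsum (Y (i,(ts,ls))) (incr_tuples (length k)))"
      unfolding second_index_def by (simp add: sum.Sigma sum.cartesian_product)
    also have "\<dots> = (\<Sum>i\<le>l. \<Sum>ts\<in>tuple_families k i. S (l - i) (raise_index k ts) \<alpha>)"
      unfolding S_def Z_def
      by (intro sum.cong refl) (auto simp: Y_def raise_index_def tuple_families_def comps_def)
    finally show ?thesis .
  qed
  ultimately show ?thesis by simp
qed

section \<open>Expansion in the first argument\<close>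

definition rank :: "nat list \<Rightarrow> nat \<Rightarrow> nat" where
  "rank m t = card {u \<in> set m. u < t}"

definition gaps :: "nat list \<Rightarrow> nat set" where
  "gaps m = {m!0..last m} - set m"

lemma finite_gaps [simp]: "finite (gaps m)"
  by (simp add: gaps_def)

lemma rank_nth: "sorted_wrt (<) m \<Longrightarrow> j < length m \<Longrightarrow> rank m (m!j) = j"
  unfolding rank_def by (rule card_less_strict_sorted_nth)

text \<open>With \<open>z t = t + \<alpha>\<close>, \<open>x = \<alpha> - \<beta>\<close> and \<open>I = {m!0..last m}\<close>, the factor \<open>C / (\<Prod>t\<in>I. z t)\<close> is
  \<open>poch_ratio \<alpha> m\<close> and \<open>C / (\<Prod>t\<in>I. z t - x)\<close> is \<open>poch_ratio \<beta> m\<close>.\<close>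

lemma prod_shift_identity:
  fixes z :: "nat \<Rightarrow> 'a::field" and x C :: 'a
  assumes sub: "A \<subseteq> I" and fI: "finite I"
    and nz: "\<And>t. t \<in> I \<Longrightarrow> z t \<noteq> 0" and nz2: "\<And>t. t \<in> I \<Longrightarrow> z t - x \<noteq> 0"
    and K1: "\<And>t. t \<in> A \<Longrightarrow> 1 \<le> K t"
  shows "C / (\<Prod>t\<in>I. z t) * ((\<Prod>t\<in>A. 1/(z t - x) * (1 / z t ^ (K t - 1))) * (\<Prod>t\<in>I - A. 1 + x/(z t - x)))
       = C / (\<Prod>t\<in>I. z t - x) * (\<Prod>t\<in>A. 1 / z t ^ K t)"
proof -
  define q where "q t = z t / (z t - x)" for t
  have e1: "(\<Prod>t\<in>A. 1/(z t - x) * (1 / z t ^ (K t - 1))) = (\<Prod>t\<in>A. q t) * (\<Prod>t\<in>A. 1 / z t ^ K t)"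
    unfolding prod.distrib[symmetric]
  proof (intro prod.cong refl)
    fix t assume t: "t \<in> A"
    obtain r where "K t = Suc r" using K1[OF t] by (cases "K t") auto
    thus "1/(z t - x) * (1 / z t ^ (K t - 1)) = q t * (1 / z t ^ K t)"
      using nz[of t] nz2[of t] t sub by (auto simp: q_def field_simps)
  qed
  have e2: "(\<Prod>t\<in>I - A. 1 + x/(z t - x)) = (\<Prod>t\<in>I - A. q t)"
    using nz2 by (intro prod.cong) (auto simp: q_def field_simps)
  have e3: "(\<Prod>t\<in>A. q t) * (\<Prod>t\<in>I - A. q t) = (\<Prod>t\<in>I. z t) / (\<Prod>t\<in>I. z t - x)"
    using prod.subset_diff[OF sub fI, of q] by (simp add: q_def prod_dividef mult.commute)
  have "(\<Prod>t\<in>I. z t) \<noteq> 0" using nz fI by simp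
  thus ?thesis
    unfolding e1 e2 mult.assoc[symmetric] mult.commute[of _ "\<Prod>t\<in>A. 1 / z t ^ K t"]
    unfolding mult.assoc e3 by (simp add: field_simps)
qed

definition first_expansion_index :: "nat list \<Rightarrow> (nat set \<times> (nat \<Rightarrow> nat)) set" where
  "first_expansion_index m = Sigma (Pow (gaps m)) (\<lambda>P. PiE (set m \<union> P) (\<lambda>_. UNIV))"

definition first_expansion_term :: "nat list \<Rightarrow> complex \<Rightarrow> complex \<Rightarrow> nat list \<Rightarrow> nat set \<times> (nat \<Rightarrow> nat) \<Rightarrow> complex" where
  "first_expansion_term k \<alpha> \<beta> m = (\<lambda>(P,d). poch_ratio \<alpha> m *
      ((\<Prod>t\<in>set m. (\<alpha>-\<beta>) ^ d t / (of_nat t + \<alpha>) ^ (Z_exponent k (rank m t) + d t))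
      * (\<Prod>t\<in>P. (\<alpha>-\<beta>) ^ Suc (d t) / (of_nat t + \<alpha>) ^ Suc (d t))))"

lemma has_sum_poch_shift_expansion:
  fixes x c :: "'a::{real_normed_field, banach}" and z :: "nat \<Rightarrow> 'a"
  assumes m: "sorted_wrt (<) m" "m \<noteq> []" and zx: "\<And>t. norm x < norm (z t)"
    and K1: "\<And>t. t \<in> set m \<Longrightarrow> 1 \<le> K t"
  defines "T \<equiv> \<lambda>(P,d). c / (\<Prod>t\<in>{m!0..last m}. z t) *
      ((\<Prod>t\<in>set m. x ^ d t / z t ^ (K t + d t)) * (\<Prod>t\<in>P. x ^ Suc (d t) / z t ^ Suc (d t)))"
  shows "(T has_sum c / (\<Prod>t\<in>{m!0..last m}. z t - x) * (\<Prod>t\<in>set m. 1 / z t ^ K t))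
           (first_expansion_index m)"
    and "(\<lambda>y. norm (T y)) summable_on first_expansion_index m"
proof -
  have disj: "set m \<inter> gaps m = {}" by (auto simp: gaps_def)
  have "z t \<noteq> 0" "z t - x \<noteq> 0" for t using zx[of t] by auto
  note identity = prod_shift_identity[where C=c and z=z and K=K, OF set_strict_sorted_subset_interval[OF m] _ this K1]
  note E = has_sum_prod_geometric_Pow_PiE[where z=z and K=K, OF finite_set finite_gaps disj zx K1]
  have T: "T = (\<lambda>y. c / (\<Prod>t\<in>{m!0..last m}. z t) * (case y of (P,d) \<Rightarrow>
      (\<Prod>t\<in>set m. x ^ d t / z t ^ (K t + d t)) * (\<Prod>t\<in>P. x ^ Suc (d t) / z t ^ Suc (d t))))"
    by (simp add: T_def case_prod_unfold)
  show "(T has_sum c / (\<Prod>t\<in>{m!0..last m}. z t - x) * (\<Prod>t\<in>set m. 1 / z t ^ K t)) (first_expansion_index m)"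
    using has_sum_cmult_right[where c="c / (\<Prod>t\<in>{m!0..last m}. z t)", OF E(1)] identity
    by (simp add: T first_expansion_index_def gaps_def)
  show "(\<lambda>y. norm (T y)) summable_on first_expansion_index m"
    unfolding T norm_mult first_expansion_index_def by (rule summable_on_cmult_right[OF E(2)])
qed

lemma first_expansion_term_has_sum:
  fixes \<alpha> \<beta> :: complex
  assumes adm: "admissible k" and ra: "0 < Re \<alpha>" and rb: "cmod (\<beta> - \<alpha>) < Re \<alpha>"
    and m: "m \<in> incr_tuples (length k)"
  shows "(first_expansion_term k \<alpha> \<beta> m has_sum Z_term k \<beta> \<alpha> m) (first_expansion_index m)"
    and "(\<lambda>y. norm (first_expansion_term k \<alpha> \<beta> m y)) summable_on (first_expansion_index m)"
    and "infsum (\<lambda>y. norm (first_expansion_term k \<alpha> \<beta> m y)) (first_expansion_index m)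
           \<le> Z_majorant k (Re \<alpha> - cmod (\<alpha> - \<beta>)) m"
proof -
  define x where "x = \<alpha> - \<beta>"
  define g where "g = Re \<alpha> - cmod x"
  define n where "n = length k"
  define z where "z t = of_nat t + \<alpha>" for t :: nat
  define K where "K t = Z_exponent k (rank m t)" for t
  define I where "I = {m!0..last m}"
  define C where "C = real (fact (last m)) / real (fact (m!0))"
  have n0: "0 < n" using adm by (simp add: admissible_def n_def)
  note mf = incr_tuplesD[OF m[folded n_def] n0]
  note bounds = norm_shift_bounds[OF rb, folded x_def, folded g_def z_def]
  have K1: "1 \<le> K t" if "t \<in> set m" for t
    using that Z_exponent_pos[OF adm] mf(1,2) by (auto simp: in_set_conv_nth K_def rank_nth n_def)
  have zne: "z t \<noteq> 0" for t using bounds(2)[of t] by auto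
  have "(\<Prod>t\<in>set m. F t (K t)) = (\<Prod>j<n. F (m!j) (Z_exponent k j))" for F :: "nat \<Rightarrow> nat \<Rightarrow> 'a::comm_monoid_mult"
    using mf(1,2) unfolding prod_set_distinct_nth[OF strict_sorted_iff[THEN iffD1, OF mf(2), THEN conjunct2]] K_def
    by (intro prod.cong) (auto simp: rank_nth)
  from this[of "\<lambda>t e. 1 / z t ^ e"] this[of "\<lambda>t e. 1 / cmod (z t) ^ e"]
  have pm: "(\<Prod>t\<in>set m. 1 / z t ^ K t) = (\<Prod>j<n. 1 / z (m!j) ^ Z_exponent k j)"
    "(\<Prod>t\<in>set m. 1 / cmod (z t) ^ K t) = (\<Prod>j<n. 1 / cmod (z (m!j)) ^ Z_exponent k j)"
    by simp_all
  have "norm (cmod x) < norm (cmod (z t))" for t using bounds(2)[of t] by simp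
  note N = has_sum_poch_shift_expansion[where z="\<lambda>t. cmod (z t)" and c=C and K=K, OF mf(2,3) this K1]
  note E = has_sum_poch_shift_expansion[where z=z and c="of_real C" and K=K, OF mf(2,3) bounds(2) K1]
  have "first_expansion_term k \<alpha> \<beta> m = (\<lambda>(P,d). of_real C / (\<Prod>t\<in>I. z t) *
      ((\<Prod>t\<in>set m. x ^ d t / z t ^ (K t + d t)) * (\<Prod>t\<in>P. x ^ Suc (d t) / z t ^ Suc (d t))))"
    by (auto simp: first_expansion_term_def poch_ratio_def x_def z_def K_def C_def I_def fun_eq_iff)
  hence norm_eq: "norm (first_expansion_term k \<alpha> \<beta> m y) = (case y of (P,d) \<Rightarrow> C / (\<Prod>t\<in>I. norm (z t)) *
      ((\<Prod>t\<in>set m. norm x ^ d t / norm (z t) ^ (K t + d t)) * (\<Prod>t\<in>P. norm x ^ Suc (d t) / norm (z t) ^ Suc (d t))))" for y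
    by (cases y) (simp add: norm_mult prod_norm[symmetric] norm_divide norm_power C_def del: power_Suc)
  have "of_real C / (\<Prod>t\<in>I. z t - x) * (\<Prod>t\<in>set m. 1 / z t ^ K t)
      = poch_ratio \<beta> m * (\<Prod>j<n. 1 / (of_nat (m!j) + \<alpha>) ^ Z_exponent k j)"
    by (simp add: pm(1)) (simp add: poch_ratio_def C_def I_def z_def x_def)
  also have "\<dots> = Z_term k \<beta> \<alpha> m"
  proof -
    have "0 < Re \<beta>" using bounds(3) complex_Re_le_cmod[of x] by (simp add: x_def g_def)
    thus ?thesis unfolding n_def using mf adm pochhammer_nonzero_if_Re_pos[of \<beta>]
      by (intro Z_term_eq_poch_ratio[symmetric]) (auto simp: admissible_def n_def)
  qed
  finally show "(first_expansion_term k \<alpha> \<beta> m has_sum Z_term k \<beta> \<alpha> m) (first_expansion_index m)"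
    using E(1) \<open>first_expansion_term k \<alpha> \<beta> m = _\<close> by (simp add: I_def)
  have hn: "((\<lambda>y. norm (first_expansion_term k \<alpha> \<beta> m y)) has_sum
      C / (\<Prod>t\<in>I. norm (z t) - norm x) * (\<Prod>t\<in>set m. 1 / norm (z t) ^ K t)) (first_expansion_index m)"
    unfolding norm_eq I_def using N(1) bounds(2) by (simp add: case_prod_unfold)
  thus "(\<lambda>y. norm (first_expansion_term k \<alpha> \<beta> m y)) summable_on (first_expansion_index m)"
    by (rule has_sum_imp_summable)
  have "C / (\<Prod>t\<in>I. cmod (z t) - cmod x) * (\<Prod>t\<in>set m. 1 / cmod (z t) ^ K t)
      \<le> poch_ratio g m * (\<Prod>j<n. 1 / (of_nat (m!j) + g) ^ Z_exponent k j)"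
  proof (intro mult_mono)
    show "C / (\<Prod>t\<in>I. cmod (z t) - cmod x) \<le> poch_ratio g m"
      unfolding poch_ratio_def C_def[symmetric] I_def[symmetric] using bounds(1,2,3)
      by (intro divide_left_mono prod_mono mult_pos_pos prod_pos conjI)
         (auto simp: C_def intro: add_nonneg_pos less_imp_le)
    have "real t + g \<le> cmod (z t)" for t using bounds(1)[of t] norm_ge_zero[of x] by linarith
    thus "(\<Prod>t\<in>set m. 1 / cmod (z t) ^ K t) \<le> (\<Prod>j<n. 1 / (of_nat (m!j) + g) ^ Z_exponent k j)"
      unfolding pm(2) using bounds(3) zne
      by (intro prod_mono conjI divide_left_mono power_mono mult_pos_pos zero_less_power) auto
  qed (use poch_ratio_pos[OF bounds(3)] in \<open>auto intro: prod_nonneg less_imp_le\<close>)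
  thus "infsum (\<lambda>y. norm (first_expansion_term k \<alpha> \<beta> m y)) (first_expansion_index m)
           \<le> Z_majorant k (Re \<alpha> - cmod (\<alpha> - \<beta>)) m"
    using hn by (simp add: has_sum_iff Z_majorant_def g_def x_def n_def)
qed
definition block_pos :: "nat list \<Rightarrow> nat \<Rightarrow> nat" where
  "block_pos js j = j + sum_list (take j js)"

lemma block_pos_0 [simp]: "block_pos js 0 = 0"
  by (simp add: block_pos_def)

lemma block_pos_Cons_Suc: "block_pos (i0 # js) (Suc j) = Suc i0 + block_pos js j"
  by (simp add: block_pos_def)

lemma block_pos_Suc: "j < length js \<Longrightarrow> block_pos js (Suc j) = block_pos js j + Suc (js!j)"
  by (simp add: block_pos_def take_Suc_conv_app_nth)

lemma block_pos_length: "block_pos js (length js) = length js + sum_list js"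
  by (simp add: block_pos_def)

lemma strict_mono_block_pos: "strict_mono (block_pos js)"
proof (rule strict_monoI)
  fix j j' :: nat assume "j < j'"
  hence "take j' js = take j js @ take (j' - j) (drop j js)"
    using take_add[of j "j' - j" js] by simp
  thus "block_pos js j < block_pos js j'" using \<open>j < j'\<close> by (simp add: block_pos_def)
qed

lemma insert_ones_Cons:
  "k' \<noteq> [] \<Longrightarrow> insert_ones (k0 # k') (i0 # js) = (k0 # replicate i0 1) @ insert_ones k' js"
  by (simp add: insert_ones_def)

lemma insert_ones_structure:
  assumes "length js = length k - 1" "k \<noteq> []"
  shows "length (insert_ones k js) = length k + sum_list js"
    and "\<And>j. j < length k \<Longrightarrow> insert_ones k js ! block_pos js j = k ! j"
    and "\<And>q. q < length k + sum_list js \<Longrightarrow> q \<notin> block_pos js ` {..<length k} \<Longrightarrow> insert_ones k js ! q = 1"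
  using assms
proof (induction k arbitrary: js)
  case Nil
  { case 1 thus ?case by simp }
  { case 2 thus ?case by simp }
  { case 3 thus ?case by simp }
next
  case (Cons k0 k')
  { case 1
    show ?case
    proof (cases "k' = []")
      case False
      then obtain i0 is' where "js = i0 # is'" using 1 by (cases js) auto
      thus ?thesis using Cons.IH(1)[of is'] False 1 by (simp add: insert_ones_Cons)
    qed (use 1 in \<open>simp add: insert_ones_def\<close>) }
  { case (2 j)
    show ?case
    proof (cases "k' = []")
      case False
      then obtain i0 is' where js: "js = i0 # is'" using 2 by (cases js) auto
      have l: "length is' = length k' - 1" using 2 js by simp
      show ?thesis
      proof (cases j)
        case (Suc j')
        hence "j' < length k'" using 2 by simp
        thus ?thesis using Cons.IH(2)[OF _ l False] False js Suc
          by (simp add: insert_ones_Cons block_pos_Cons_Suc nth_append)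
      qed (use False js in \<open>simp add: insert_ones_Cons\<close>)
    qed (use 2 in \<open>simp add: insert_ones_def\<close>) }
  { case (3 q)
    have q0: "q \<noteq> 0" using 3 by (auto intro: image_eqI[where x=0])
    show ?case
    proof (cases "k' = []")
      case True
      thus ?thesis using 3 q0 by simp
    next
      case False
      then obtain i0 is' where js: "js = i0 # is'" using 3 by (cases js) auto
      have l: "length is' = length k' - 1" using 3 js by simp
      show ?thesis
      proof (cases "q < Suc i0")
        case True
        then obtain q'' where "q = Suc q''" "q'' < i0" using q0 by (cases q) auto
        thus ?thesis using False js by (simp add: insert_ones_Cons nth_append)
      next
        case False
        define q' where "q' = q - Suc i0"
        have qq: "q = Suc i0 + q'" using False by (simp add: q'_def)
        have "q' \<notin> block_pos is' ` {..<length k'}"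
        proof
          assume "q' \<in> block_pos is' ` {..<length k'}"
          then obtain j' where "j' < length k'" "q' = block_pos is' j'" by auto
          hence "q = block_pos js (Suc j')" "Suc j' < length (k0 # k')"
            using qq js by (auto simp: block_pos_Cons_Suc)
          thus False using 3 by blast
        qed
        moreover have "q' < length k' + sum_list is'" using 3 js qq by simp
        ultimately have "insert_ones k' is' ! q' = 1"
          using Cons.IH(3)[OF _ _ l \<open>k' \<noteq> []\<close>] by simp
        thus ?thesis using \<open>k' \<noteq> []\<close> js qq by (simp add: insert_ones_Cons nth_append)
      qed
    qed }
qed

definition gap_count :: "nat list \<Rightarrow> nat set \<Rightarrow> nat \<Rightarrow> nat" where
  "gap_count m P j = card {t \<in> P. m!j < t \<and> t < m!(Suc j)}"

lemma card_gaps_below: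
  fixes m :: "nat list"
  assumes ms: "sorted_wrt (<) m" and P: "P \<subseteq> gaps m" and j: "j < length m"
  shows "card {t \<in> P. t < m!j} = (\<Sum>j'<j. gap_count m P j')"
  using j
proof (induction j)
  case 0
  have "{t \<in> P. t < m!0} = {}" using P by (auto simp: gaps_def)
  thus ?case by simp
next
  case (Suc j)
  have fP: "finite P" using P finite_gaps finite_subset by blast
  have "m!j < m!Suc j" using ms Suc.prems by (simp add: sorted_wrt_iff_nth_less)
  moreover have "t \<noteq> m!j" if "t \<in> P" for t using that P Suc.prems by (auto simp: gaps_def)
  ultimately have "{t \<in> P. t < m!Suc j} = {t \<in> P. t < m!j} \<union> {t \<in> P. m!j < t \<and> t < m!(Suc j)}"
    by (auto simp: linorder_neq_iff)
  hence "card {t \<in> P. t < m!Suc j} = card {t \<in> P. t < m!j} + gap_count m P j"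
    unfolding gap_count_def using fP by (simp only:) (rule card_Un_disjoint, simp, simp, fastforce)
  thus ?case using Suc by simp
qed

lemma card_eq_sum_gap_count:
  fixes m :: "nat list"
  assumes ms: "sorted_wrt (<) m" and mne: "m \<noteq> []" and P: "P \<subseteq> gaps m"
  shows "card P = (\<Sum>j<length m - 1. gap_count m P j)"
proof -
  have "t < m!(length m - 1)" if "t \<in> P" for t
  proof -
    have "t \<le> last m" "t \<noteq> last m" using that P last_in_set[OF mne] by (auto simp: gaps_def)
    thus ?thesis using mne by (simp add: last_conv_nth)
  qed
  hence "{t \<in> P. t < m!(length m - 1)} = P" by auto
  thus ?thesis using card_gaps_below[OF ms P, of "length m - 1"] mne by simp
qed

definition block_entries :: "nat \<Rightarrow> nat list \<Rightarrow> nat list \<Rightarrow> nat list" where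
  "block_entries n js m' = map (\<lambda>j. m' ! block_pos js j) [0..<n]"

lemma block_entries_props:
  assumes "length js = n - 1" "0 < n" "length m' = n + sum_list js" "sorted_wrt (<) m'"
  defines "m \<equiv> block_entries n js m'"
  shows "\<And>j. j < n \<Longrightarrow> block_pos js j < length m'" and "block_pos js (n - 1) = length m' - 1"
    and "length m = n" and "\<And>j. j < n \<Longrightarrow> m ! j = m' ! block_pos js j" and "sorted_wrt (<) m"
    and "m ! 0 = m' ! 0" and "last m = last m'" and "set m \<subseteq> set m'"
proof -
  show last: "block_pos js (n - 1) = length m' - 1"
    using block_pos_length[of js] assms(1-3) by simp
  show lt: "block_pos js j < length m'" if "j < n" for j
  proof -
    have "block_pos js j \<le> block_pos js (n - 1)"
      using strict_mono_less_eq[OF strict_mono_block_pos[of js], of j "n - 1"] that by simp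
    thus ?thesis using last assms(2,3) by linarith
  qed
  show ln: "length m = n" and mj: "\<And>j. j < n \<Longrightarrow> m ! j = m' ! block_pos js j"
    by (simp_all add: m_def block_entries_def)
  show "sorted_wrt (<) m"
    unfolding sorted_wrt_iff_nth_less ln
    using lt mj assms(4) strict_mono_less[OF strict_mono_block_pos]
    by (auto simp: sorted_wrt_iff_nth_less)
  show "m ! 0 = m' ! 0" using mj[of 0] assms(2) by simp
  have "m' \<noteq> []" using assms(2,3) by auto
  thus "last m = last m'"
    using ln mj[of "n - 1"] last assms(2) by (auto simp: last_conv_nth)
  show "set m \<subseteq> set m'" using lt by (auto simp: m_def block_entries_def)
qed

definition first_index :: "nat list \<Rightarrow> nat \<Rightarrow> (nat \<times> (nat list \<times> nat list)) set" where
  "first_index k l = Sigma {..l} (\<lambda>i. comps (length k - 1) i \<times> comps (length k + i) (l - i))"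

definition first_target :: "nat list \<Rightarrow> (nat \<times> ((nat \<times> (nat list \<times> nat list)) \<times> nat list)) set" where
  "first_target k = Sigma UNIV (\<lambda>l. Sigma (first_index k l) (\<lambda>j. incr_tuples (length k + fst j)))"

definition first_source :: "nat list \<Rightarrow> (nat list \<times> (nat set \<times> (nat \<Rightarrow> nat))) set" where
  "first_source k = Sigma (incr_tuples (length k)) first_expansion_index"

text \<open>\<open>(m, P, d)\<close> goes to the tuple \<open>m' = m \<union> P\<close>, the exponents \<open>d\<close> listed along \<open>m'\<close>, and the
  numbers of points of \<open>P\<close> between consecutive entries of \<open>m\<close>, which say where the ones are inserted.\<close>

definition first_encode :: "nat list \<Rightarrow> nat list \<times> (nat set \<times> (nat \<Rightarrow> nat)) \<Rightarrow>
    nat \<times> ((nat \<times> (nat list \<times> nat list)) \<times> nat list)" where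
  "first_encode k = (\<lambda>(m,(P,d)). (card P + (\<Sum>t\<in>set m \<union> P. d t),
     ((card P, (map (gap_count m P) [0..<length k - 1], map d (sorted_list_of_set (set m \<union> P)))),
      sorted_list_of_set (set m \<union> P))))"

definition first_decode :: "nat list \<Rightarrow> nat \<times> ((nat \<times> (nat list \<times> nat list)) \<times> nat list) \<Rightarrow>
    nat list \<times> (nat set \<times> (nat \<Rightarrow> nat))" where
  "first_decode k = (\<lambda>(l,((i,(js,ls)),m')). (block_entries (length k) js m',
     (set m' - set (block_entries (length k) js m'), restrict (\<lambda>t. ls ! rank m' t) (set m'))))"

lemma first_targetD:
  assumes "(l,((i,(js,ls)),m')) \<in> first_target k"
  shows "i \<le> l" "length js = length k - 1" "sum_list js = i"
    "length ls = length k + i" "sum_list ls = l - i" "length m' = length k + i" "sorted_wrt (<) m'"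
  using assms by (auto simp: first_target_def first_index_def comps_def incr_tuples_def)

lemma first_encode_inverse:
  assumes adm: "admissible k" and b: "b \<in> first_source k"
  shows "first_decode k (first_encode k b) = b" and "first_encode k b \<in> first_target k"
proof -
  obtain m P d where bv: "b = (m, (P, d))" by (cases b) auto
  have m: "m \<in> incr_tuples (length k)" and P: "P \<subseteq> gaps m" and d: "d \<in> PiE (set m \<union> P) (\<lambda>_. UNIV)"
    using b by (auto simp: first_source_def first_expansion_index_def bv)
  define n where "n = length k"
  define M' where "M' = set m \<union> P"
  define m' where "m' = sorted_list_of_set M'"
  define js where "js = map (gap_count m P) [0..<n - 1]"
  have n0: "0 < n" using adm by (simp add: admissible_def n_def)
  note mf = incr_tuplesD[OF m[folded n_def] n0]
  have fP: "finite P" using P finite_gaps finite_subset by blast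
  have fM: "finite M'" using fP by (simp add: M'_def)
  have disj: "set m \<inter> P = {}" using P by (auto simp: gaps_def)
  have "card (set m) = n" using mf(1,2) by (simp add: strict_sorted_iff distinct_card)
  hence cM: "card M' = n + card P" using fP disj by (simp add: M'_def card_Un_disjoint)
  have sm': "set m' = M'" "sorted_wrt (<) m'" "length m' = card M'"
    using fM by (auto simp: m'_def strict_sorted_list_of_set)
  have enc: "first_encode k b = (card P + (\<Sum>t\<in>M'. d t), ((card P, (js, map d m')), m'))"
    by (simp add: first_encode_def bv M'_def m'_def js_def n_def)
  have pos: "block_pos js j = card {u \<in> M'. u < m!j}" if j: "j < n" for j
  proof -
    have "{u \<in> M'. u < m!j} = {u \<in> set m. u < m!j} \<union> {t \<in> P. t < m!j}" by (auto simp: M'_def)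
    hence "card {u \<in> M'. u < m!j} = card {u \<in> set m. u < m!j} + card {t \<in> P. t < m!j}"
      using disj fP by (simp only:) (intro card_Un_disjoint, auto)
    also have "card {u \<in> set m. u < m!j} = j" using card_less_strict_sorted_nth[OF mf(2)] j mf(1) by simp
    also have "card {t \<in> P. t < m!j} = sum_list (take j js)"
      using card_gaps_below[OF mf(2) P] j mf(1)
      by (simp add: js_def take_map sum_list_sum_nth atLeast0LessThan)
    finally show ?thesis by (simp add: block_pos_def)
  qed
  have "block_entries n js m' = m"
  proof (rule nth_equalityI)
    fix j assume "j < length (block_entries n js m')"
    hence j: "j < n" by (simp add: block_entries_def)
    have "m!j \<in> M'" using j mf(1) by (auto simp: M'_def)
    thus "block_entries n js m' ! j = m!j"
      using pos[OF j] sorted_list_of_set_nth_card_less(1)[OF fM] j by (simp add: m'_def block_entries_def)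
  qed (use mf(1) in \<open>simp add: block_entries_def\<close>)
  moreover have "set m' - set m = P" using sm'(1) disj by (auto simp: M'_def)
  moreover have "restrict (\<lambda>t. map d m' ! rank m' t) (set m') = d"
  proof
    fix t
    show "restrict (\<lambda>t. map d m' ! rank m' t) (set m') t = d t"
    proof (cases "t \<in> M'")
      case True
      have "rank m' t < length m'" using sorted_list_of_set_nth_card_less(2)[OF fM True] sm' by (simp add: rank_def)
      thus ?thesis using True sorted_list_of_set_nth_card_less(1)[OF fM True] sm'(1) by (simp add: m'_def rank_def)
    next
      case False thus ?thesis using d sm'(1) by (auto simp: PiE_def extensional_def M'_def)
    qed
  qed
  ultimately show "first_decode k (first_encode k b) = b"
    unfolding enc by (simp add: first_decode_def bv n_def)
  have "sum_list (map d m') = (\<Sum>t\<in>M'. d t)"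
    using sm' by (simp add: sum_list_distinct_conv_sum_set strict_sorted_iff)
  moreover have "js \<in> comps (length k - 1) (card P)"
    using card_eq_sum_gap_count[OF mf(2,3) P] mf(1) by (simp add: comps_def js_def n_def sum_list_sum_nth atLeast0LessThan)
  ultimately show "first_encode k b \<in> first_target k"
    unfolding enc using sm' cM by (simp add: first_target_def first_index_def comps_def incr_tuples_def n_def)
qed

lemma gap_count_block_entries:
  assumes "length js = n - 1" "0 < n" "length m' = n + sum_list js" "sorted_wrt (<) m'" and j: "j < n - 1"
  defines "m \<equiv> block_entries n js m'"
  shows "gap_count m (set m' - set m) j = js ! j"
proof -
  define P where "P = set m' - set m"
  note be = block_entries_props[OF assms(1-4), folded m_def]
  define p0 where "p0 = block_pos js j"
  define p1 where "p1 = block_pos js (Suc j)"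
  have p1p0: "p1 = p0 + Suc (js!j)" using block_pos_Suc[of j js] j assms(1) by (simp add: p0_def p1_def)
  have p1N: "p1 < length m'" using be(1)[of "Suc j"] j by (simp add: p1_def)
  have not_in_m: "t \<notin> set m" if "p0 < q" "q < p1" "t = m'!q" for q t
  proof
    assume "t \<in> set m"
    then obtain j' where j': "j' < n" "t = m!j'" using be(3) by (auto simp: in_set_conv_nth)
    hence "q = block_pos js j'"
      using that be(1,4) p1N assms(4) by (auto simp: strict_sorted_nth_eq_iff)
    thus False using that strict_mono_less[OF strict_mono_block_pos[of js], of j' j]
        strict_mono_less_eq[OF strict_mono_block_pos[of js], of "Suc j" j']
      by (cases "j' \<le> j") (auto simp: p0_def p1_def)
  qed
  have "{t \<in> P. m!j < t \<and> t < m!(Suc j)} = (\<lambda>q. m'!q) ` {p0<..<p1}"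
  proof (intro equalityI subsetI)
    fix t assume t: "t \<in> {t \<in> P. m!j < t \<and> t < m!(Suc j)}"
    then obtain q where q: "q < length m'" "t = m'!q" by (auto simp: P_def in_set_conv_nth)
    have "m'!p0 < m'!q" "m'!q < m'!p1" using t q be(4)[of j] be(4)[of "Suc j"] j by (auto simp: p0_def p1_def)
    hence "p0 < q" "q < p1" using strict_sorted_nth_less_iff[OF assms(4)] q p1N p1p0 by auto
    thus "t \<in> (\<lambda>q. m'!q) ` {p0<..<p1}" using q by auto
  next
    fix t assume "t \<in> (\<lambda>q. m'!q) ` {p0<..<p1}"
    then obtain q where q: "p0 < q" "q < p1" "t = m'!q" by auto
    hence "m'!p0 < m'!q" "m'!q < m'!p1" "t \<in> set m'"
      using strict_sorted_nth_less_iff[OF assms(4)] p1N by auto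
    thus "t \<in> {t \<in> P. m!j < t \<and> t < m!(Suc j)}"
      using q not_in_m be(4)[of j] be(4)[of "Suc j"] j
      by (auto simp: P_def p0_def p1_def)
  qed
  moreover have "inj_on (\<lambda>q. m'!q) {p0<..<p1}"
    using p1N assms(4) by (intro inj_onI) (auto simp: strict_sorted_nth_eq_iff)
  ultimately show ?thesis using p1p0 by (simp add: gap_count_def card_image P_def)
qed

lemma first_decode_inverse:
  assumes adm: "admissible k" and a: "a \<in> first_target k"
  shows "first_encode k (first_decode k a) = a" and "first_decode k a \<in> first_source k"
proof -
  obtain l i js ls m' where av: "a = (l,((i,(js,ls)),m'))" by (cases a) auto
  define n where "n = length k"
  define m where "m = block_entries n js m'"
  define P where "P = set m' - set m"
  define d where "d = restrict (\<lambda>t. ls ! rank m' t) (set m')"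
  note mem = first_targetD[OF a[unfolded av], folded n_def]
  have n0: "0 < n" using adm by (simp add: admissible_def n_def)
  note be = block_entries_props[OF mem(2) n0 _ mem(7), folded m_def, unfolded mem(3), OF mem(6)]
  have dec: "first_decode k a = (m, (P, d))" by (simp add: first_decode_def av m_def P_def d_def n_def)
  have MM: "set m \<union> P = set m'" using be(8) by (auto simp: P_def)
  have "P \<subseteq> gaps m"
  proof
    fix t assume t: "t \<in> P"
    then obtain q where q: "q < length m'" "t = m'!q" by (auto simp: P_def in_set_conv_nth)
    have "m'!0 \<le> m'!q" "m'!q \<le> m'!(length m' - 1)" using q mem(7) by (auto intro!: strict_sorted_nth_mono)
    moreover have "last m' = m'!(length m' - 1)" using q by (intro last_conv_nth) auto
    ultimately show "t \<in> gaps m" using t q be(6,7) by (auto simp: gaps_def P_def)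
  qed
  moreover have "m \<in> incr_tuples (length k)" using be(3,5) by (simp add: incr_tuples_def n_def)
  ultimately show "first_decode k a \<in> first_source k"
    unfolding dec first_source_def first_expansion_index_def by (simp add: d_def MM)
  have "card P = i"
  proof -
    have "card P = card (set m') - card (set m)" unfolding P_def using be(8) by (simp add: card_Diff_subset)
    thus ?thesis using mem(6,7) be(3,5) by (simp add: strict_sorted_iff distinct_card)
  qed
  moreover have "gap_count m P j = js!j" if "j < n - 1" for j
    using gap_count_block_entries[OF mem(2) n0 _ mem(7) that] mem(3,6) by (simp add: m_def P_def)
  hence "map (gap_count m P) [0..<n - 1] = js" using mem(2) by (intro nth_equalityI) auto
  moreover have "map d m' = ls"
    using mem(4,6) by (intro nth_equalityI) (auto simp: d_def rank_nth[OF mem(7)])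
  moreover have "sorted_list_of_set (set m') = m'"
    using mem(7) by (simp add: sorted_list_of_set.idem_if_sorted_distinct strict_sorted_iff)
  moreover have "(\<Sum>t\<in>set m'. d t) = l - i"
    using \<open>map d m' = ls\<close> mem(5,7) by (simp add: sum_list_distinct_conv_sum_set[symmetric] strict_sorted_iff)
  ultimately show "first_encode k (first_decode k a) = a"
    unfolding dec first_encode_def using mem(1) by (simp add: av n_def MM)
qed

lemma Z_exponent_insert_ones:
  assumes adm: "admissible k" and js: "length js = length k - 1" and ls: "length ls = length k + sum_list js"
  defines "k' \<equiv> map2 (+) (insert_ones k js) ls"
  shows "length k' = length k + sum_list js"
    and "\<And>j. j < length k \<Longrightarrow> Z_exponent k' (block_pos js j) = Z_exponent k j + ls ! block_pos js j"
    and "\<And>q. q < length k' \<Longrightarrow> q \<notin> block_pos js ` {..<length k} \<Longrightarrow> Z_exponent k' q = Suc (ls ! q)"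
proof -
  define n where "n = length k"
  have n0: "0 < n" and kne: "k \<noteq> []" using adm by (auto simp: admissible_def n_def)
  note io = insert_ones_structure[OF js kne]
  show lk': "length k' = length k + sum_list js" using io(1) ls by (simp add: k'_def)
  have "block_pos js (n - 1) = n - 1 + sum_list js" using block_pos_length[of js] js by (simp add: n_def)
  hence last: "block_pos js (n - 1) = length k' - 1" using lk' n0 unfolding n_def by linarith
  have lt: "block_pos js j < length k'" if "j < n" for j
  proof -
    have "block_pos js j \<le> block_pos js (n - 1)"
      using strict_mono_less_eq[OF strict_mono_block_pos[of js], of j "n - 1"] that by simp
    thus ?thesis using last n0 lk' unfolding n_def by linarith
  qed
  show "Z_exponent k' (block_pos js j) = Z_exponent k j + ls ! block_pos js j" if j: "j < length k" for j
  proof -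
    have "k' ! block_pos js j = k!j + ls ! block_pos js j"
      using io(1) io(2)[of j] j lt[of j] lk' by (simp add: k'_def n_def)
    moreover have "block_pos js j = length k' - 1 \<longleftrightarrow> j = n - 1"
      using strict_mono_eq[OF strict_mono_block_pos[of js], of j "n - 1"] last by auto
    ultimately show ?thesis using Z_exponent_pos[OF adm j] lk' by (auto simp: Z_exponent_def n_def)
  qed
  show "Z_exponent k' q = Suc (ls ! q)" if q: "q < length k'" "q \<notin> block_pos js ` {..<length k}" for q
  proof -
    have "k' ! q = 1 + ls!q" using io(1) io(3)[of q] q lk' by (simp add: k'_def)
    moreover have "q \<noteq> length k' - 1"
    proof
      assume "q = length k' - 1"
      hence "q = block_pos js (n - 1)" using last by simp
      moreover have "n - 1 \<in> {..<length k}" using n0 by (simp add: n_def)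
      ultimately show False using q(2) by blast
    qed
    ultimately show ?thesis by (simp add: Z_exponent_def lk')
  qed
qed

lemma first_expansion_term_decode:
  fixes \<alpha> \<beta> :: complex
  assumes adm: "admissible k" and ra: "0 < Re \<alpha>" and a: "(l,((i,(js,ls)),m')) \<in> first_target k"
  shows "case_prod (first_expansion_term k \<alpha> \<beta>) (first_decode k (l,((i,(js,ls)),m')))
           = (\<alpha> - \<beta>) ^ l * Z_term (map2 (+) (insert_ones k js) ls) \<alpha> \<alpha> m'"
proof -
  define n where "n = length k"
  define N where "N = length m'"
  define x where "x = \<alpha> - \<beta>"
  define m where "m = block_entries n js m'"
  define P where "P = set m' - set m"
  define d where "d = restrict (\<lambda>t. ls ! rank m' t) (set m')"
  define k' where "k' = map2 (+) (insert_ones k js) ls"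
  define Q where "Q = block_pos js ` {..<n}"
  define z where "z q = of_nat (m'!q) + \<alpha>" for q
  define e where "e q = ls!q + (if q \<in> Q then 0 else 1)" for q
  note mem = first_targetD[OF a, folded n_def]
  have n0: "0 < n" using adm by (simp add: admissible_def n_def)
  note be = block_entries_props[OF mem(2) n0 _ mem(7), folded m_def, unfolded mem(3), OF mem(6)]
  note exps = Z_exponent_insert_ones[OF adm mem(2)[unfolded n_def] mem(4)[unfolded n_def mem(3)[symmetric]],
      folded k'_def n_def, unfolded mem(3), folded mem(6) N_def]
  have dec: "first_decode k (l,((i,(js,ls)),m')) = (m, (P, d))"
    by (simp add: first_decode_def m_def P_def d_def n_def)
  have dm: "distinct m" using be(5) by (simp add: strict_sorted_iff)
  have inj_pos: "inj_on (block_pos js) {..<n}"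
    using strict_mono_block_pos by (rule strict_mono_imp_inj_on)
  have ON: "Q \<subseteq> {..<N}" using be(1) by (auto simp: Q_def N_def)
  have inj_m': "inj_on (\<lambda>q. m'!q) {..<N}"
    using mem(7) by (intro inj_onI) (auto simp: strict_sorted_nth_eq_iff N_def)
  have "set m = (\<lambda>q. m'!q) ` Q"
    by (simp add: m_def block_entries_def Q_def image_image atLeast0LessThan)
  moreover have "set m' = (\<lambda>q. m'!q) ` {..<N}" by (auto simp: in_set_conv_nth N_def)
  ultimately have PP: "P = (\<lambda>q. m'!q) ` ({..<N} - Q)"
    unfolding P_def by (simp add: inj_on_image_set_diff[OF inj_m' _ ON])
  have dq: "d (m'!q) = ls!q" if "q < N" for q using that mem(7) by (simp add: d_def rank_nth N_def)
  have "(\<Prod>t\<in>set m. x ^ d t / (of_nat t + \<alpha>) ^ (Z_exponent k (rank m t) + d t))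
      = (\<Prod>j<n. x ^ e (block_pos js j) / z (block_pos js j) ^ Z_exponent k' (block_pos js j))"
    unfolding prod_set_distinct_nth[OF dm] be(3)
    using be(1,4) dq exps(2) rank_nth[OF be(5)]
    by (intro prod.cong) (auto simp: e_def z_def Q_def be(3) N_def)
  also have "\<dots> = (\<Prod>q\<in>Q. x ^ e q / z q ^ Z_exponent k' q)"
    unfolding Q_def by (rule prod.reindex[OF inj_pos, symmetric, unfolded comp_def])
  finally have p1: "(\<Prod>t\<in>set m. x ^ d t / (of_nat t + \<alpha>) ^ (Z_exponent k (rank m t) + d t))
      = (\<Prod>q\<in>Q. x ^ e q / z q ^ Z_exponent k' q)" .
  have "(\<Prod>t\<in>P. x ^ Suc (d t) / (of_nat t + \<alpha>) ^ Suc (d t))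
      = (\<Prod>q\<in>{..<N} - Q. x ^ Suc (d (m'!q)) / (of_nat (m'!q) + \<alpha>) ^ Suc (d (m'!q)))"
    unfolding PP by (rule prod.reindex[OF inj_on_subset[OF inj_m'], unfolded comp_def]) auto
  also have "\<dots> = (\<Prod>q\<in>{..<N} - Q. x ^ e q / z q ^ Z_exponent k' q)"
    using exps(1,3) by (intro prod.cong refl) (auto simp: dq e_def z_def Q_def)
  finally have p2: "(\<Prod>t\<in>P. x ^ Suc (d t) / (of_nat t + \<alpha>) ^ Suc (d t))
      = (\<Prod>q\<in>{..<N} - Q. x ^ e q / z q ^ Z_exponent k' q)" .
  have "(\<Sum>q<N. e q) = (\<Sum>q<N. ls!q) + card ({..<N} - Q)"
    by (simp add: e_def sum.distrib sum.If_cases Int_absorb1 ON Diff_eq)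
  also have "card ({..<N} - Q) = i"
    using ON card_image[OF inj_pos] mem(6) by (simp add: card_Diff_subset finite_subset Q_def N_def)
  finally have "(\<Sum>q<N. e q) = l"
    using mem(1,4,5,6) by (simp add: sum_list_sum_nth atLeast0LessThan N_def)
  have "(\<Prod>q\<in>Q. x ^ e q / z q ^ Z_exponent k' q) * (\<Prod>q\<in>{..<N} - Q. x ^ e q / z q ^ Z_exponent k' q)
      = (\<Prod>q<N. x ^ e q * (1 / z q ^ Z_exponent k' q))"
    using prod.subset_diff[OF ON, of "\<lambda>q. x ^ e q / z q ^ Z_exponent k' q"] by (simp add: mult.commute)
  also have "\<dots> = x ^ l * (\<Prod>q<N. 1 / z q ^ Z_exponent k' q)"
    unfolding prod.distrib power_sum[symmetric] \<open>(\<Sum>q<N. e q) = l\<close> ..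
  finally have p12: "(\<Prod>q\<in>Q. x ^ e q / z q ^ Z_exponent k' q) * (\<Prod>q\<in>{..<N} - Q. x ^ e q / z q ^ Z_exponent k' q)
      = x ^ l * (\<Prod>q<N. 1 / z q ^ Z_exponent k' q)" .
  moreover have "poch_ratio \<alpha> m = poch_ratio \<alpha> m'" by (simp add: poch_ratio_def be(6,7))
  ultimately have "case_prod (first_expansion_term k \<alpha> \<beta>) (m, (P, d))
      = x ^ l * (poch_ratio \<alpha> m' * (\<Prod>q<length k'. 1 / (of_nat (m'!q) + \<alpha>) ^ Z_exponent k' q))"
    unfolding first_expansion_term_def using p1 p2 exps(1) by (simp add: x_def z_def N_def ac_simps)
  also have "poch_ratio \<alpha> m' * (\<Prod>q<length k'. 1 / (of_nat (m'!q) + \<alpha>) ^ Z_exponent k' q) = Z_term k' \<alpha> \<alpha> m'"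
  proof (rule Z_term_eq_poch_ratio[symmetric])
    show "m'!0 \<le> last m'" using incr_tuplesD(5)[of m n] be(3,5,6,7) n0 by (simp add: incr_tuples_def)
  qed (use exps(1) mem(6) n0 pochhammer_nonzero_if_Re_pos[OF ra] in \<open>auto simp: N_def\<close>)
  finally show ?thesis unfolding dec by (simp add: k'_def x_def)
qed

lemma Z_first_argument_expansion:
  fixes \<alpha> \<beta> :: complex
  assumes adm: "admissible k" and ra: "0 < Re \<alpha>" and rb: "cmod (\<beta> - \<alpha>) < Re \<alpha>"
  shows "(\<lambda>l. (\<alpha> - \<beta>) ^ l * (\<Sum>i\<le>l. \<Sum>js\<in>comps (length k - 1) i.
             S (l - i) (insert_ones k js) \<alpha>)) sums Z k \<beta> \<alpha>"
proof -
  define Y where "Y = (\<lambda>(j::nat \<times> (nat list \<times> nat list)) m.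
    case j of (i,(js,ls)) \<Rightarrow> Z_term (map2 (+) (insert_ones k js) ls) \<alpha> \<alpha> m)"
  define H where "H = (\<lambda>(l, (j, m)). (\<alpha> - \<beta>) ^ l * Y j m)"
  have "((\<lambda>(m,y). first_expansion_term k \<alpha> \<beta> m y) has_sum Z k \<beta> \<alpha>) (first_source k)"
    unfolding first_source_def
    by (rule has_sum_Sigma_incr_tuples[OF adm rb]) (use first_expansion_term_has_sum[OF adm ra rb] in auto)
  hence "(H has_sum Z k \<beta> \<alpha>) (first_target k)"
    using has_sum_reindex_bij_witness[of "first_target k" "first_encode k" "first_decode k"
            "first_source k" "\<lambda>(m,y). first_expansion_term k \<alpha> \<beta> m y" H]
      first_decode_inverse[OF adm] first_encode_inverse[OF adm] first_expansion_term_decode[OF adm ra]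
    by (force simp: H_def Y_def)
  hence "(\<lambda>l. (\<alpha> - \<beta>) ^ l * (\<Sum>j\<in>first_index k l. infsum (Y j) (incr_tuples (length k + fst j))))
      sums Z k \<beta> \<alpha>"
    unfolding first_target_def by (rule sums_collect_powers) (auto simp: first_index_def H_def)
  moreover have "(\<Sum>j\<in>first_index k l. infsum (Y j) (incr_tuples (length k + fst j)))
      = (\<Sum>i\<le>l. \<Sum>js\<in>comps (length k - 1) i. S (l - i) (insert_ones k js) \<alpha>)" for l
  proof -
    have "(\<Sum>j\<in>first_index k l. infsum (Y j) (incr_tuples (length k + fst j)))
        = (\<Sum>i\<le>l. \<Sum>js\<in>comps (length k - 1) i. \<Sum>ls\<in>comps (length k + i) (l - i).
             infsum (Y (i,(js,ls))) (incr_tuples (length k + i)))"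
      unfolding first_index_def by (simp add: sum.Sigma sum.cartesian_product split_def)
    also have "\<dots> = (\<Sum>i\<le>l. \<Sum>js\<in>comps (length k - 1) i. S (l - i) (insert_ones k js) \<alpha>)"
      unfolding S_def Z_def using adm insert_ones_structure(1)
      by (intro sum.cong refl) (auto simp: Y_def comps_def admissible_def)
    finally show ?thesis .
  qed
  ultimately show ?thesis by simp
qed

theorem lemma2p6:
  fixes k :: "nat list" and \<alpha> \<beta> :: complex
  assumes "admissible k" and "0 < Re \<alpha>" and "cmod (\<beta> - \<alpha>) < Re \<alpha>"
  shows "((\<lambda>l. (\<alpha> - \<beta>) ^ l * (\<Sum>i\<le>l. \<Sum>is\<in>comps (length k - 1) i.
             S (l - i) (insert_ones k is) \<alpha>)) sums Z k \<beta> \<alpha>)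
       \<and> ((\<lambda>l. (\<alpha> - \<beta>) ^ l * (\<Sum>i\<le>l. \<Sum>ts\<in>tuple_families k i.
             S (l - i) (raise_index k ts) \<alpha>)) sums Z k \<alpha> \<beta>)"
  using Z_first_argument_expansion[OF assms] Z_second_argument_expansion[OF assms] by blast

end
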